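(* Let $d\in\mathbb{N}$ and $c=500d+10^6$. For every positive integer $N$ and every $X\subseteq[N]^d$, there exists a partial coloring $\chi:X\to\{-1,0,1\}$ that assigns $\pm1$ to at least $|X|/10$ elements of $X$ and satisfies \[ \max_{A_0\in\mathcal{A}_d}|\chi(A_0\cap X)|\le cN^{\frac{d}{2d+2}}. \]
   Context: $[N]=\{1,\dots,N\}$. An arithmetic progression in $d$ dimensions is a set $\{\mathbf{a}+i\mathbf{b}: i=0,\dots,l-1\}$ with $\mathbf{a},\mathbf{b}\in\mathbb{Z}^d$, $\mathbf{b}\ne\mathbf{0}$, $l\in\mathbb{N}$; $\mathcal{A}_d$ is the family of such progressions contained in $[N]^d$. For $\chi:X\to\{-1,0,1\}$ and $A\subseteq X$, $\chi(A)=\sum_{x\in A}\chi(x)$. *)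

theory Defs
  imports Complex_Main
begin

text \<open>Points of Z^d are represented as integer lists of length d.\<close>

definition grid :: "nat \<Rightarrow> nat \<Rightarrow> int list set" where
  "grid d N = {x. length x = d \<and> (\<forall>i<d. 1 \<le> x ! i \<and> x ! i \<le> int N)}"

definition vadd :: "int list \<Rightarrow> int list \<Rightarrow> int list" where
  "vadd a b = map2 (+) a b"

definition vsmul :: "int \<Rightarrow> int list \<Rightarrow> int list" where
  "vsmul k b = map ((*) k) b"

definition progression :: "int list \<Rightarrow> int list \<Rightarrow> nat \<Rightarrow> int list set" where
  "progression a b l = {vadd a (vsmul (int i) b) | i. i < l}"

definition APs :: "nat \<Rightarrow> nat \<Rightarrow> int list set set" where
  "APs d N = {progression a b l | a b l.
      length a = d \<and> length b = d \<and> b \<noteq> replicate d 0 \<and> l \<ge> 1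
      \<and> progression a b l \<subseteq> grid d N}"

definition chi_sum :: "(int list \<Rightarrow> int) \<Rightarrow> int list set \<Rightarrow> int" where
  "chi_sum \<chi> A = (\<Sum>x\<in>A. \<chi> x)"

end

theory Submission
  imports Defs "HOL-Library.FuncSet"
begin

text \<open>The entropy method. For each length 2^k, step direction b and start a aligned to a multiple
  of 2^k along its line, round the sum of a uniformly random sign vector over the block
  progression a b (2^k) \<inter> X to a multiple of a threshold \<Delta>_k. By Hoeffding's inequality, and
  because aligned blocks with a common direction and length are disjoint, these rounded sums have
  total entropy at most |X|/4. So one joint value is taken by 2^|X| e^(-|X|/4) sign vectors, two of
  which differ in at least |X|/10 places; half their difference is a partial colouring whose sum over
  every aligned block is below its threshold. A progression in the grid, read along its line, splits
  into at most two aligned blocks of each length, so its discrepancy is bounded by the sum of the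
  thresholds, which is O(sqrt ((d + 1) 2^K0)) for a scale 2^K0 of order N^(d/(d+1)).\<close>

section \<open>Entropy on a finite uniform space\<close>

definition fiber_card :: "'w set \<Rightarrow> ('w \<Rightarrow> 'b) \<Rightarrow> 'w \<Rightarrow> nat" where
  "fiber_card \<Omega> Y \<omega> = card {\<omega>'\<in>\<Omega>. Y \<omega>' = Y \<omega>}"

definition entropy :: "'w set \<Rightarrow> ('w \<Rightarrow> 'b) \<Rightarrow> real" where
  "entropy \<Omega> Y = (\<Sum>\<omega>\<in>\<Omega>. ln (card \<Omega> / fiber_card \<Omega> Y \<omega>)) / card \<Omega>"

lemma fiber_card_pos: "finite \<Omega> \<Longrightarrow> \<omega> \<in> \<Omega> \<Longrightarrow> fiber_card \<Omega> Y \<omega> > 0"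
  unfolding fiber_card_def by (subst card_gt_0_iff) auto

lemma sum_divide_fiber_card:
  assumes "finite \<Omega>"
  shows "(\<Sum>\<omega>\<in>\<Omega>. g (Y \<omega>) / real (fiber_card \<Omega> Y \<omega>)) = (\<Sum>v\<in>Y`\<Omega>. g v)"
proof -
  have "(\<Sum>\<omega>\<in>\<Omega>. g (Y \<omega>) / real (fiber_card \<Omega> Y \<omega>))
      = (\<Sum>v\<in>Y`\<Omega>. \<Sum>\<omega>\<in>{\<omega>\<in>\<Omega>. Y \<omega> = v}. g v / real (card {\<omega>\<in>\<Omega>. Y \<omega> = v}))"
    unfolding sum.image_gen[OF assms, of "\<lambda>\<omega>. g (Y \<omega>) / real (fiber_card \<Omega> Y \<omega>)" Y]
    by (intro sum.cong refl) (auto simp: fiber_card_def)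
  also have "\<dots> = (\<Sum>v\<in>Y`\<Omega>. g v)"
    using assms by (intro sum.cong refl) (auto simp: card_gt_0_iff)
  finally show ?thesis .
qed

lemma sum_card_fibers:
  assumes "finite \<Omega>"
  shows "(\<Sum>v\<in>Y`\<Omega>. real (card {\<omega>\<in>\<Omega>. Y \<omega> = v})) = card \<Omega>"
  using sum.image_gen[OF assms, of "\<lambda>_. 1::real" Y] by simp

lemma entropy_le_cross_entropy:
  assumes fin: "finite \<Omega>" and ne: "\<Omega> \<noteq> {}"
    and q_pos: "\<And>v. v \<in> Y`\<Omega> \<Longrightarrow> q v > 0" and q_sum: "(\<Sum>v\<in>Y`\<Omega>. q v) \<le> 1"
  shows "entropy \<Omega> Y \<le> (\<Sum>\<omega>\<in>\<Omega>. - ln (q (Y \<omega>))) / card \<Omega>"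
proof -
  let ?n = "real (card \<Omega>)" and ?c = "\<lambda>\<omega>. real (fiber_card \<Omega> Y \<omega>)"
  have n_pos: "?n > 0" using fin ne by (simp add: card_gt_0_iff)
  have pos: "?c \<omega> > 0" "q (Y \<omega>) > 0" if "\<omega> \<in> \<Omega>" for \<omega>
    using fiber_card_pos[OF fin that] q_pos that by auto
  have "(\<Sum>\<omega>\<in>\<Omega>. ln (?n / ?c \<omega>)) - (\<Sum>\<omega>\<in>\<Omega>. - ln (q (Y \<omega>)))
      = (\<Sum>\<omega>\<in>\<Omega>. ln (?n * q (Y \<omega>) / ?c \<omega>))"
    unfolding sum_subtractf[symmetric]
  proof (intro sum.cong refl)
    fix \<omega> assume "\<omega> \<in> \<Omega>"
    with pos[OF this] n_pos show "ln (?n / ?c \<omega>) - - ln (q (Y \<omega>)) = ln (?n * q (Y \<omega>) / ?c \<omega>)"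
      by (simp add: ln_div ln_mult)
  qed
  also have "\<dots> \<le> (\<Sum>\<omega>\<in>\<Omega>. ?n * q (Y \<omega>) / ?c \<omega> - 1)"
    using pos n_pos by (intro sum_mono ln_le_minus_one) auto
  also have "\<dots> = ?n * (\<Sum>\<omega>\<in>\<Omega>. q (Y \<omega>) / ?c \<omega>) - ?n"
    by (simp add: sum_subtractf sum_distrib_left)
  also have "\<dots> = ?n * (\<Sum>v\<in>Y`\<Omega>. q v) - ?n"
    using sum_divide_fiber_card[OF fin, of q Y] by simp
  also have "\<dots> \<le> 0" using q_sum n_pos by (simp add: mult_left_le)
  finally show ?thesis unfolding entropy_def using n_pos by (simp add: divide_right_mono)
qed

lemma entropy_const [simp]: "entropy \<Omega> (\<lambda>_. c) = 0"
proof -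
  have "ln (card \<Omega> / card \<Omega>) = 0" by (cases "card \<Omega> = 0") auto
  then show ?thesis unfolding entropy_def fiber_card_def by simp
qed

lemma entropy_comp_le:
  assumes "finite \<Omega>"
  shows "entropy \<Omega> (\<lambda>\<omega>. h (Y \<omega>)) \<le> entropy \<Omega> Y"
  unfolding entropy_def
proof (intro divide_right_mono sum_mono)
  fix \<omega> assume \<omega>: "\<omega> \<in> \<Omega>"
  have "fiber_card \<Omega> Y \<omega> \<le> fiber_card \<Omega> (\<lambda>\<omega>. h (Y \<omega>)) \<omega>"
    unfolding fiber_card_def using assms by (intro card_mono) auto
  then show "ln (card \<Omega> / fiber_card \<Omega> (\<lambda>\<omega>. h (Y \<omega>)) \<omega>) \<le> ln (card \<Omega> / fiber_card \<Omega> Y \<omega>)"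
    using fiber_card_pos[OF assms \<omega>, of Y] fiber_card_pos[OF assms \<omega>, of "\<lambda>\<omega>. h (Y \<omega>)"] \<omega> assms
    by (subst ln_le_cancel_iff) (auto intro!: divide_left_mono divide_pos_pos simp: card_gt_0_iff)
qed simp

lemma entropy_pair_le:
  assumes fin: "finite \<Omega>" and ne: "\<Omega> \<noteq> {}"
  shows "entropy \<Omega> (\<lambda>\<omega>. (Y1 \<omega>, Y2 \<omega>)) \<le> entropy \<Omega> Y1 + entropy \<Omega> Y2"
proof -
  let ?n = "real (card \<Omega>)"
  have n_pos: "?n > 0" using fin ne by (simp add: card_gt_0_iff)
  define p1 where "p1 u = real (card {\<omega>\<in>\<Omega>. Y1 \<omega> = u}) / ?n" for u
  define p2 where "p2 v = real (card {\<omega>\<in>\<Omega>. Y2 \<omega> = v}) / ?n" for v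
  have p1_eq: "p1 (Y1 \<omega>) = fiber_card \<Omega> Y1 \<omega> / ?n" and p2_eq: "p2 (Y2 \<omega>) = fiber_card \<Omega> Y2 \<omega> / ?n" for \<omega>
    unfolding p1_def p2_def fiber_card_def by simp_all
  have pos: "fiber_card \<Omega> Y1 \<omega> > 0" "fiber_card \<Omega> Y2 \<omega> > 0" if "\<omega> \<in> \<Omega>" for \<omega>
    using fiber_card_pos[OF fin that] by auto
  text \<open>Compare with the product of the two marginal distributions.\<close>
  define q where "q = (\<lambda>(u, v). p1 u * p2 v)"
  have "entropy \<Omega> (\<lambda>\<omega>. (Y1 \<omega>, Y2 \<omega>)) \<le> (\<Sum>\<omega>\<in>\<Omega>. - ln (q (Y1 \<omega>, Y2 \<omega>))) / card \<Omega>"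
  proof (rule entropy_le_cross_entropy[OF fin ne])
    show "\<And>v. v \<in> (\<lambda>\<omega>. (Y1 \<omega>, Y2 \<omega>)) ` \<Omega> \<Longrightarrow> 0 < q v"
      using pos n_pos by (auto simp: q_def p1_eq p2_eq)
    have "(\<Sum>v\<in>(\<lambda>\<omega>. (Y1 \<omega>, Y2 \<omega>)) ` \<Omega>. q v) \<le> (\<Sum>v\<in>Y1`\<Omega> \<times> Y2`\<Omega>. q v)"
      using fin by (intro sum_mono2) (auto simp: q_def p1_def p2_def)
    also have "\<dots> = (\<Sum>u\<in>Y1`\<Omega>. p1 u) * (\<Sum>v\<in>Y2`\<Omega>. p2 v)"
      by (simp add: q_def sum_product sum.cartesian_product)
    also have "\<dots> = 1"
      unfolding p1_def p2_def using sum_card_fibers[OF fin, of Y1] sum_card_fibers[OF fin, of Y2] n_pos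
      by (simp add: sum_divide_distrib[symmetric])
    finally show "(\<Sum>v\<in>(\<lambda>\<omega>. (Y1 \<omega>, Y2 \<omega>)) ` \<Omega>. q v) \<le> 1" .
  qed
  also have "\<dots> = entropy \<Omega> Y1 + entropy \<Omega> Y2"
    unfolding entropy_def add_divide_distrib[symmetric] sum.distrib[symmetric]
    using pos n_pos by (intro arg_cong2[where f = "(/)"] sum.cong refl)
      (simp add: q_def p1_eq p2_eq ln_mult ln_div)
  finally show ?thesis .
qed

lemma entropy_family_le:
  fixes Y :: "'i \<Rightarrow> 'w \<Rightarrow> 'b::zero"
  assumes fin: "finite \<Omega>" and ne: "\<Omega> \<noteq> {}" and I: "finite I"
  shows "entropy \<Omega> (\<lambda>\<omega> i. if i \<in> I then Y i \<omega> else 0) \<le> (\<Sum>i\<in>I. entropy \<Omega> (Y i))"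
  using I
proof (induction I rule: finite_induct)
  case empty
  then show ?case by simp
next
  case (insert j I)
  let ?F = "\<lambda>I \<omega> i. if i \<in> I then Y i \<omega> else 0"
  have "?F (insert j I) \<omega> = (\<lambda>(v, f). f(j := v)) (Y j \<omega>, ?F I \<omega>)" for \<omega>
    using insert.hyps by auto
  then have "entropy \<Omega> (?F (insert j I)) \<le> entropy \<Omega> (\<lambda>\<omega>. (Y j \<omega>, ?F I \<omega>))"
    using entropy_comp_le[OF fin, of "\<lambda>(v, f). f(j := v)" "\<lambda>\<omega>. (Y j \<omega>, ?F I \<omega>)"] by simp
  also have "\<dots> \<le> entropy \<Omega> (Y j) + entropy \<Omega> (?F I)"
    by (rule entropy_pair_le[OF fin ne])
  also have "\<dots> \<le> entropy \<Omega> (Y j) + (\<Sum>i\<in>I. entropy \<Omega> (Y i))" using insert.IH by simp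
  finally show ?case using insert.hyps by simp
qed

lemma exists_large_fiber:
  assumes fin: "finite \<Omega>" and ne: "\<Omega> \<noteq> {}"
  shows "\<exists>\<omega>\<in>\<Omega>. real (fiber_card \<Omega> Y \<omega>) \<ge> card \<Omega> * exp (- entropy \<Omega> Y)"
proof (rule ccontr)
  let ?n = "real (card \<Omega>)"
  have n_pos: "?n > 0" using fin ne by (simp add: card_gt_0_iff)
  assume "\<not> ?thesis"
  then have "entropy \<Omega> Y < ln (?n / fiber_card \<Omega> Y \<omega>)" if "\<omega> \<in> \<Omega>" for \<omega>
    using fiber_card_pos[OF fin that, of Y] that n_pos
    by (auto simp: not_le ln_div ln_mult ln_less_cancel_iff[symmetric] simp del: ln_less_cancel_iff)
  then have "(\<Sum>\<omega>\<in>\<Omega>. entropy \<Omega> Y) < (\<Sum>\<omega>\<in>\<Omega>. ln (?n / fiber_card \<Omega> Y \<omega>))"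
    using fin ne by (intro sum_strict_mono) auto
  then show False unfolding entropy_def using n_pos by simp
qed

section \<open>Sums of random signs\<close>

definition sign_vectors :: "'a set \<Rightarrow> ('a \<Rightarrow> int) set" where
  "sign_vectors X = PiE X (\<lambda>_. {-1, 1})"

lemma card_sign_vectors: "finite X \<Longrightarrow> card (sign_vectors X) = 2 ^ card X"
  unfolding sign_vectors_def by (simp add: card_PiE numeral_2_eq_2)

lemma finite_sign_vectors: "finite X \<Longrightarrow> finite (sign_vectors X)"
  unfolding sign_vectors_def by (simp add: finite_PiE)

lemma sign_vectors_nonempty: "sign_vectors X \<noteq> {}"
  unfolding sign_vectors_def by (simp add: PiE_eq_empty_iff)

lemma sign_vectors_value: "\<omega> \<in> sign_vectors X \<Longrightarrow> x \<in> X \<Longrightarrow> \<omega> x = -1 \<or> \<omega> x = 1"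
  unfolding sign_vectors_def by (auto simp: PiE_iff)

lemma sinh_le_mult_cosh:
  fixes x :: real assumes x: "x \<ge> 0"
  shows "sinh x \<le> x * cosh x"
proof -
  define \<psi> where "\<psi> t = t * cosh t - sinh t" for t :: real
  have d: "(\<psi> has_real_derivative t * sinh t) (at t)" for t
    unfolding \<psi>_def by (auto intro!: derivative_eq_intros simp: algebra_simps)
  have c: "continuous_on {0..x} \<psi>"
    by (rule continuous_at_imp_continuous_on) (use d DERIV_isCont in blast)
  have "\<psi> 0 \<le> \<psi> x"
  proof (rule DERIV_nonneg_imp_increasing_open[OF x _ c])
    fix t :: real assume "0 < t" "t < x"
    then show "\<exists>y. (\<psi> has_real_derivative y) (at t) \<and> 0 \<le> y"
      using d by (intro exI[of _ "t * sinh t"]) auto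
  qed
  then show ?thesis unfolding \<psi>_def by simp
qed

lemma cosh_le_exp_square: "cosh (x::real) \<le> exp (x^2 / 2)"
proof -
  have nonneg: "cosh y \<le> exp (y^2 / 2)" if y: "y \<ge> 0" for y :: real
  proof -
    define q where "q t = cosh t * exp (- (t^2 / 2))" for t :: real
    have d: "(q has_real_derivative (sinh t - t * cosh t) * exp (- (t^2 / 2))) (at t)" for t
      unfolding q_def by (auto intro!: derivative_eq_intros simp: algebra_simps)
    have c: "continuous_on {0..y} q"
      by (rule continuous_at_imp_continuous_on) (use d DERIV_isCont in blast)
    have "q y \<le> q 0"
    proof (rule DERIV_nonpos_imp_decreasing_open[OF y _ c])
      fix t :: real assume "0 < t" "t < y"
      then have "(sinh t - t * cosh t) * exp (- (t^2 / 2)) \<le> 0"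
        using sinh_le_mult_cosh[of t] by (simp add: mult_nonpos_nonneg)
      then show "\<exists>d. (q has_real_derivative d) (at t) \<and> d \<le> 0" using d by blast
    qed
    then have "cosh y * exp (- (y^2 / 2)) * exp (y^2 / 2) \<le> exp (y^2 / 2)"
      unfolding q_def by simp
    then show ?thesis by (simp add: mult.assoc flip: exp_add)
  qed
  show ?thesis
    using nonneg[of x] nonneg[of "-x"] by (cases "x \<ge> 0") auto
qed

definition spin_sum :: "'a set \<Rightarrow> ('a \<Rightarrow> int) \<Rightarrow> real" where
  "spin_sum S \<omega> = (\<Sum>x\<in>S. real_of_int (\<omega> x))"

text \<open>Hoeffding's lemma for uniformly random signs, the expectation being written as a sum over all
  sign vectors.\<close>

lemma sum_exp_spin_sum_le:
  assumes X: "finite X" and S: "S \<subseteq> X"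
  shows "(\<Sum>\<omega>\<in>sign_vectors X. exp (\<mu> * spin_sum S \<omega>)) \<le> 2 ^ card X * exp (\<mu>^2 * card S / 2)"
proof -
  define f where "f x v = (if x \<in> S then exp (\<mu> * real_of_int v) else 1)" for x v
  have finS: "finite S" using X S finite_subset by blast
  have "exp (\<mu> * spin_sum S \<omega>) = (\<Prod>x\<in>S. exp (\<mu> * real_of_int (\<omega> x)))" for \<omega>
    using finS by (simp add: spin_sum_def sum_distrib_left exp_sum)
  also have "\<dots> \<omega> = (\<Prod>x\<in>X. f x (\<omega> x))" for \<omega>
    unfolding f_def using X S by (intro prod.mono_neutral_cong_left) auto
  finally have "(\<Sum>\<omega>\<in>sign_vectors X. exp (\<mu> * spin_sum S \<omega>)) = (\<Sum>\<omega>\<in>sign_vectors X. \<Prod>x\<in>X. f x (\<omega> x))"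
    by simp
  also have "\<dots> = (\<Prod>x\<in>X. \<Sum>v\<in>{-1,1}. f x v)"
    unfolding sign_vectors_def by (rule prod_sum_PiE[symmetric]) (use X in auto)
  also have "\<dots> \<le> (\<Prod>x\<in>X. 2 * (if x \<in> S then exp (\<mu>^2 / 2) else 1))"
  proof (rule prod_mono)
    fix x assume "x \<in> X"
    have "(\<Sum>v\<in>{-1::int,1}. f x v) = (if x \<in> S then 2 * cosh \<mu> else 2)"
      unfolding f_def by (simp add: cosh_def)
    then show "0 \<le> (\<Sum>v\<in>{-1,1}. f x v) \<and> (\<Sum>v\<in>{-1,1}. f x v) \<le> 2 * (if x \<in> S then exp (\<mu>^2 / 2) else 1)"
      using cosh_le_exp_square[of \<mu>] by auto
  qed
  also have "\<dots> = 2 ^ card X * (\<Prod>x\<in>S. exp (\<mu>^2 / 2))"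
    using X S by (simp add: prod.distrib prod.If_cases Int_absorb1)
  also have "\<dots> = 2 ^ card X * exp (\<mu>^2 * card S / 2)"
    by (simp add: exp_of_nat_mult[symmetric] mult.commute)
  finally show ?thesis .
qed

lemma sum_exp_abs_spin_sum_le:
  assumes X: "finite X" and S: "S \<subseteq> X"
  shows "(\<Sum>\<omega>\<in>sign_vectors X. exp (\<mu> * \<bar>spin_sum S \<omega>\<bar>)) \<le> 2 * 2 ^ card X * exp (\<mu>^2 * card S / 2)"
proof -
  have "(\<Sum>\<omega>\<in>sign_vectors X. exp (\<mu> * \<bar>spin_sum S \<omega>\<bar>))
      \<le> (\<Sum>\<omega>\<in>sign_vectors X. exp (\<mu> * spin_sum S \<omega>)) + (\<Sum>\<omega>\<in>sign_vectors X. exp ((-\<mu>) * spin_sum S \<omega>))"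
    unfolding sum.distrib[symmetric]
    by (intro sum_mono) (auto simp: abs_if add_increasing add_increasing2)
  also have "\<dots> \<le> 2 ^ card X * exp (\<mu>^2 * card S / 2) + 2 ^ card X * exp ((-\<mu>)^2 * card S / 2)"
    by (intro add_mono sum_exp_spin_sum_le X S)
  finally show ?thesis by simp
qed

lemma sum_power_abs_le:
  fixes r :: real
  assumes r: "0 < r" "r < 1" and F: "finite F"
  shows "(\<Sum>j\<in>F. r ^ nat \<bar>j\<bar>) \<le> (1 + r) / (1 - r)"
proof -
  let ?g = "\<lambda>j::int. r ^ nat \<bar>j\<bar>"
  have summable: "summable (\<lambda>k. r ^ k)" using r by (simp add: summable_geometric)
  have suminf: "(\<Sum>k. r ^ k) = 1 / (1 - r)" using r by (simp add: suminf_geometric)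
  have nonneg: "sum ?g (F \<inter> {j. 0 \<le> j}) \<le> 1 / (1 - r)"
  proof -
    have "sum ?g (F \<inter> {j. 0 \<le> j}) = sum (\<lambda>k. r ^ k) (nat ` (F \<inter> {j. 0 \<le> j}))"
      by (subst sum.reindex) (auto simp: inj_on_def intro!: sum.cong)
    also have "\<dots> \<le> (\<Sum>k. r ^ k)"
      by (rule sum_le_suminf[OF summable]) (use F r in auto)
    finally show ?thesis using suminf by simp
  qed
  have neg: "sum ?g (F - {j. 0 \<le> j}) \<le> r / (1 - r)"
  proof -
    have "sum ?g (F - {j. 0 \<le> j}) = r * sum (\<lambda>k. r ^ k) ((\<lambda>j. nat (-j-1)) ` (F - {j. 0 \<le> j}))"
      by (subst sum.reindex) (auto simp: inj_on_def sum_distrib_left nat_diff_distrib' intro!: sum.cong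
          simp flip: power_Suc)
    also have "\<dots> \<le> r * (\<Sum>k. r ^ k)"
      by (intro mult_left_mono sum_le_suminf[OF summable]) (use F r in auto)
    finally show ?thesis using suminf by simp
  qed
  have "sum ?g F = sum ?g (F \<inter> {j. 0 \<le> j}) + sum ?g (F - {j. 0 \<le> j})"
    using F by (rule sum.Int_Diff)
  also have "\<dots> \<le> 1 / (1 - r) + r / (1 - r)" using nonneg neg by linarith
  finally show ?thesis by (simp add: add_divide_distrib)
qed

text \<open>Gibbs' inequality against the two-sided geometric distribution on the integers.\<close>

lemma entropy_le_geometric:
  fixes Y :: "'w \<Rightarrow> int" and r :: real
  assumes fin: "finite \<Omega>" and ne: "\<Omega> \<noteq> {}" and r: "0 < r" "r < 1"
  shows "entropy \<Omega> Y \<le> ln ((1 + r) / (1 - r)) + ln (1 / r) * ((\<Sum>\<omega>\<in>\<Omega>. \<bar>real_of_int (Y \<omega>)\<bar>) / card \<Omega>)"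
proof -
  define c where "c = (1 - r) / (1 + r)"
  have c_pos: "c > 0" unfolding c_def using r by simp
  define q where "q j = c * r ^ nat \<bar>j\<bar>" for j :: int
  have n_pos: "real (card \<Omega>) > 0" using fin ne by (simp add: card_gt_0_iff)
  have "entropy \<Omega> Y \<le> (\<Sum>\<omega>\<in>\<Omega>. - ln (q (Y \<omega>))) / card \<Omega>"
  proof (rule entropy_le_cross_entropy[OF fin ne])
    show "\<And>v. v \<in> Y ` \<Omega> \<Longrightarrow> 0 < q v" unfolding q_def using c_pos r by simp
    have "(\<Sum>v\<in>Y ` \<Omega>. q v) \<le> c * ((1 + r) / (1 - r))"
      unfolding q_def sum_distrib_left[symmetric]
      by (intro mult_left_mono sum_power_abs_le) (use r fin c_pos in auto)
    also have "\<dots> = 1" unfolding c_def using r by simp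
    finally show "(\<Sum>v\<in>Y ` \<Omega>. q v) \<le> 1" .
  qed
  also have "(\<Sum>\<omega>\<in>\<Omega>. - ln (q (Y \<omega>))) = (\<Sum>\<omega>\<in>\<Omega>. ln ((1 + r) / (1 - r)) + ln (1 / r) * \<bar>real_of_int (Y \<omega>)\<bar>)"
    unfolding q_def c_def using r by (intro sum.cong refl) (simp add: ln_mult ln_div ln_realpow)
  also have "\<dots> = card \<Omega> * ln ((1 + r) / (1 - r)) + ln (1 / r) * (\<Sum>\<omega>\<in>\<Omega>. \<bar>real_of_int (Y \<omega>)\<bar>)"
    by (simp add: sum.distrib sum_distrib_left)
  finally show ?thesis using n_pos by (simp add: add_divide_distrib)
qed

text \<open>The index of the multiple of 2\<Delta> nearest to the spin sum.\<close>

definition rounded_sum :: "'a set \<Rightarrow> real \<Rightarrow> ('a \<Rightarrow> int) \<Rightarrow> int" where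
  "rounded_sum S \<Delta> \<omega> = \<lfloor>(spin_sum S \<omega> + \<Delta>) / (2 * \<Delta>)\<rfloor>"

lemma abs_rounded_sum_le:
  assumes "\<Delta> > 0"
  shows "\<bar>real_of_int (rounded_sum S \<Delta> \<omega>)\<bar> \<le> \<bar>spin_sum S \<omega>\<bar> / (2 * \<Delta>) + 1/2"
proof -
  let ?t = "(spin_sum S \<omega> + \<Delta>) / (2 * \<Delta>)"
  have "?t = spin_sum S \<omega> / (2 * \<Delta>) + 1/2" and "\<bar>spin_sum S \<omega> / (2 * \<Delta>)\<bar> = \<bar>spin_sum S \<omega>\<bar> / (2 * \<Delta>)"
    using assms by (simp_all add: field_simps)
  moreover have "real_of_int (rounded_sum S \<Delta> \<omega>) \<le> ?t" "?t < real_of_int (rounded_sum S \<Delta> \<omega>) + 1"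
    unfolding rounded_sum_def by linarith+
  ultimately show ?thesis by linarith
qed

lemma rounded_sum_eq_0:
  assumes "\<Delta> > 0" "\<bar>spin_sum S \<omega>\<bar> < \<Delta>"
  shows "rounded_sum S \<Delta> \<omega> = 0"
proof -
  have "0 \<le> (spin_sum S \<omega> + \<Delta>) / (2 * \<Delta>)" "(spin_sum S \<omega> + \<Delta>) / (2 * \<Delta>) < 1"
    using assms by (simp_all add: field_simps)
  then show ?thesis unfolding rounded_sum_def by (simp add: floor_eq_iff)
qed

lemma abs_rounded_sum_le_exp:
  assumes \<Delta>: "\<Delta> > 0" and \<mu>: "\<mu> \<ge> 1 / \<Delta>"
  shows "\<bar>real_of_int (rounded_sum S \<Delta> \<omega>)\<bar> \<le> exp (\<mu> * \<bar>spin_sum S \<omega>\<bar> - \<mu> * \<Delta>)"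
proof (cases "\<bar>spin_sum S \<omega>\<bar> < \<Delta>")
  case True
  then show ?thesis using rounded_sum_eq_0[OF \<Delta> True] by simp
next
  case False
  let ?z = "\<bar>spin_sum S \<omega>\<bar>"
  have "\<bar>real_of_int (rounded_sum S \<Delta> \<omega>)\<bar> \<le> ?z / (2 * \<Delta>) + 1/2" by (rule abs_rounded_sum_le[OF \<Delta>])
  also have "\<dots> \<le> 1 + (1 / \<Delta>) * (?z - \<Delta>)" using False \<Delta> by (simp add: field_simps)
  also have "\<dots> \<le> 1 + \<mu> * (?z - \<Delta>)" using False \<mu> by (intro add_left_mono mult_right_mono) auto
  also have "\<dots> \<le> exp (\<mu> * (?z - \<Delta>))" by (rule exp_ge_add_one_self)
  finally show ?thesis by (simp add: right_diff_distrib)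
qed

lemma rounded_sum_eq_imp_close:
  assumes "\<Delta> > 0" "rounded_sum S \<Delta> \<omega> = rounded_sum S \<Delta> \<omega>'"
  shows "\<bar>spin_sum S \<omega> - spin_sum S \<omega>'\<bar> < 2 * \<Delta>"
proof -
  let ?a = "(spin_sum S \<omega> + \<Delta>) / (2 * \<Delta>)" and ?b = "(spin_sum S \<omega>' + \<Delta>) / (2 * \<Delta>)"
  have "\<bar>?a - ?b\<bar> < 1" using assms(2) unfolding rounded_sum_def by linarith
  moreover have "?a - ?b = (spin_sum S \<omega> - spin_sum S \<omega>') / (2 * \<Delta>)"
    using assms(1) by (simp add: field_simps)
  ultimately have "\<bar>spin_sum S \<omega> - spin_sum S \<omega>'\<bar> / (2 * \<Delta>) < 1" using assms(1) by simp
  then show ?thesis using assms(1) by (simp add: field_simps)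
qed

lemma quadratic_le_exp_quarter:
  fixes x :: real assumes "x \<ge> 0"
  shows "(6 + x) * x \<le> 88 * exp (x / 4)"
proof -
  have "(1 + x / 8)^2 \<le> exp (x / 8) ^ 2"
    using exp_ge_add_one_self[of "x / 8"] assms by (intro power_mono) auto
  also have "exp (x / 8) ^ 2 = exp (x / 4)" by (simp add: power2_eq_square flip: exp_add)
  finally have "x^2 \<le> 64 * exp (x / 4)" using assms by (simp add: power2_eq_square field_simps)
  moreover have "6 * x \<le> 24 * exp (x / 4)" using exp_ge_add_one_self[of "x / 4"] by linarith
  ultimately show ?thesis by (simp add: power2_eq_square algebra_simps)
qed

lemma sum_abs_rounded_sum_le_tail:
  fixes \<Delta> :: real
  assumes X: "finite X" and S: "S \<subseteq> X" and s: "card S > 0" and \<Delta>: "\<Delta> > 0" "card S \<le> \<Delta>^2"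
  shows "(\<Sum>\<omega>\<in>sign_vectors X. \<bar>real_of_int (rounded_sum S \<Delta> \<omega>)\<bar>)
           \<le> 2 * card (sign_vectors X) * exp (- (\<Delta>^2) / (2 * card S))"
proof -
  let ?s = "real (card S)"
  define \<mu> where "\<mu> = \<Delta> / ?s"
  have \<mu>: "\<mu> \<ge> 1 / \<Delta>" unfolding \<mu>_def using \<Delta> s by (simp add: field_simps power2_eq_square)
  have "(\<Sum>\<omega>\<in>sign_vectors X. \<bar>real_of_int (rounded_sum S \<Delta> \<omega>)\<bar>)
      \<le> (\<Sum>\<omega>\<in>sign_vectors X. exp (-\<mu> * \<Delta>) * exp (\<mu> * \<bar>spin_sum S \<omega>\<bar>))"
    by (rule sum_mono) (use abs_rounded_sum_le_exp[OF \<Delta>(1) \<mu>] in \<open>simp add: exp_add[symmetric]\<close>)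
  also have "\<dots> \<le> exp (-\<mu> * \<Delta>) * (2 * 2 ^ card X * exp (\<mu>^2 * ?s / 2))"
    unfolding sum_distrib_left[symmetric] by (intro mult_left_mono sum_exp_abs_spin_sum_le X S) auto
  also have "\<dots> = 2 * 2 ^ card X * exp (-\<mu> * \<Delta> + \<mu>^2 * ?s / 2)" by (simp only: exp_add mult_ac)
  also have "-\<mu> * \<Delta> + \<mu>^2 * ?s / 2 = - (\<Delta>^2) / (2 * ?s)"
    unfolding \<mu>_def using s by (simp add: field_simps power2_eq_square)
  finally show ?thesis using card_sign_vectors[OF X] by simp
qed

lemma sum_abs_spin_sum_le:
  assumes X: "finite X" and S: "S \<subseteq> X" and s: "card S > 0"
  shows "(\<Sum>\<omega>\<in>sign_vectors X. \<bar>spin_sum S \<omega>\<bar>) \<le> 2 * card (sign_vectors X) * sqrt (card S)"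
proof -
  define \<sigma> where "\<sigma> = sqrt (card S)"
  have \<sigma>: "\<sigma> > 0" "\<sigma>^2 = card S" unfolding \<sigma>_def using s by auto
  text \<open>Use z \<le> \<sigma> exp (z/\<sigma> - 1) and the moment generating function at 1/\<sigma>.\<close>
  have "(\<Sum>\<omega>\<in>sign_vectors X. \<bar>spin_sum S \<omega>\<bar>)
      \<le> (\<Sum>\<omega>\<in>sign_vectors X. \<sigma> * exp (-1) * exp ((1 / \<sigma>) * \<bar>spin_sum S \<omega>\<bar>))"
  proof (rule sum_mono)
    fix \<omega>
    have "\<bar>spin_sum S \<omega>\<bar> / \<sigma> \<le> exp (\<bar>spin_sum S \<omega>\<bar> / \<sigma> - 1)"
      using exp_ge_add_one_self[of "\<bar>spin_sum S \<omega>\<bar> / \<sigma> - 1"] by simp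
    then have "\<bar>spin_sum S \<omega>\<bar> \<le> \<sigma> * exp (\<bar>spin_sum S \<omega>\<bar> / \<sigma> - 1)"
      using \<sigma> by (simp add: field_simps)
    then show "\<bar>spin_sum S \<omega>\<bar> \<le> \<sigma> * exp (-1) * exp ((1 / \<sigma>) * \<bar>spin_sum S \<omega>\<bar>)"
      by (simp add: exp_diff exp_minus field_simps)
  qed
  also have "\<dots> \<le> \<sigma> * exp (-1) * (2 * 2 ^ card X * exp ((1 / \<sigma>)^2 * card S / 2))"
    unfolding sum_distrib_left[symmetric]
    by (intro mult_left_mono sum_exp_abs_spin_sum_le X S) (use \<sigma> s in auto)
  also have "(1 / \<sigma>)^2 * card S = 1" using \<sigma> s by (simp add: field_simps)
  also have "\<sigma> * exp (-1) * (2 * 2 ^ card X * exp (1 / 2)) = 2 * 2 ^ card X * \<sigma> * exp (-1/2)"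
    by (simp add: algebra_simps flip: exp_add)
  also have "\<dots> \<le> 2 * 2 ^ card X * \<sigma>" using \<sigma> by simp
  finally show ?thesis unfolding \<sigma>_def card_sign_vectors[OF X] by simp
qed

lemma entropy_rounded_sum_le_tail:
  fixes \<Delta> :: real
  assumes X: "finite X" and S: "S \<subseteq> X" and s: "card S > 0" and \<Delta>: "\<Delta> > 0" "card S \<le> \<Delta>^2"
  shows "entropy (sign_vectors X) (rounded_sum S \<Delta>) \<le> 100 * (card S / \<Delta>^2) * exp (- (\<Delta>^2) / (4 * card S))"
proof -
  define x where "x = \<Delta>^2 / card S"
  have x: "x \<ge> 1" unfolding x_def using \<Delta> s by simp
  define \<theta> where "\<theta> = exp (- x / 2)"
  have \<theta>: "\<theta> > 0" "\<theta> \<le> 2/3"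
  proof -
    have "\<theta> \<le> exp (- 1/2)" unfolding \<theta>_def using x by simp
    also have "\<dots> \<le> 1 / (1 + 1/2)"
      using exp_ge_add_one_self[of "1/2"] by (simp add: exp_minus field_simps)
    finally show "\<theta> \<le> 2/3" by simp
  qed (simp add: \<theta>_def)
  have n_pos: "real (card (sign_vectors X)) > 0"
    using finite_sign_vectors[OF X] sign_vectors_nonempty by (simp add: card_gt_0_iff)
  have mean: "(\<Sum>\<omega>\<in>sign_vectors X. \<bar>real_of_int (rounded_sum S \<Delta> \<omega>)\<bar>) / card (sign_vectors X) \<le> 2 * \<theta>"
    using sum_abs_rounded_sum_le_tail[OF assms] n_pos unfolding \<theta>_def x_def by (simp add: field_simps)
  have "entropy (sign_vectors X) (rounded_sum S \<Delta>)
      \<le> ln ((1 + \<theta>) / (1 - \<theta>)) + ln (1 / \<theta>) * ((\<Sum>\<omega>\<in>sign_vectors X. \<bar>real_of_int (rounded_sum S \<Delta> \<omega>)\<bar>) / card (sign_vectors X))"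
    by (rule entropy_le_geometric[OF finite_sign_vectors[OF X] sign_vectors_nonempty]) (use \<theta> in auto)
  also have "\<dots> \<le> 6 * \<theta> + (x / 2) * (2 * \<theta>)"
  proof (rule add_mono)
    have "ln ((1 + \<theta>) / (1 - \<theta>)) \<le> (1 + \<theta>) / (1 - \<theta>) - 1" by (rule ln_le_minus_one) (use \<theta> in auto)
    also have "\<dots> \<le> 6 * \<theta>" using \<theta> by (simp add: field_simps)
    finally show "ln ((1 + \<theta>) / (1 - \<theta>)) \<le> 6 * \<theta>" .
    have ln_\<theta>: "ln (1 / \<theta>) = x / 2" unfolding \<theta>_def by (simp add: ln_div)
    show "ln (1 / \<theta>) * ((\<Sum>\<omega>\<in>sign_vectors X. \<bar>real_of_int (rounded_sum S \<Delta> \<omega>)\<bar>) / card (sign_vectors X)) \<le> (x / 2) * (2 * \<theta>)"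
      unfolding ln_\<theta> using mean x by (intro mult_left_mono) auto
  qed
  also have "\<dots> = exp (- x / 4) * ((6 + x) * exp (- x / 4))"
    unfolding \<theta>_def by (simp add: algebra_simps flip: exp_add)
  also have "\<dots> \<le> exp (- x / 4) * (88 / x)"
  proof (rule mult_left_mono)
    have "(6 + x) * x * exp (- x / 4) \<le> 88 * exp (x / 4) * exp (- x / 4)"
      using quadratic_le_exp_quarter[of x] x by (intro mult_right_mono) auto
    also have "\<dots> = 88" by (simp flip: exp_add)
    finally show "(6 + x) * exp (- x / 4) \<le> 88 / x" using x by (simp add: field_simps)
  qed simp
  also have "\<dots> \<le> 100 * (card S / \<Delta>^2) * exp (- (\<Delta>^2) / (4 * card S))"
    unfolding x_def using s \<Delta> by (simp add: field_simps)
  finally show ?thesis .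
qed

lemma mean_abs_rounded_sum_le:
  fixes \<Delta> :: real
  assumes X: "finite X" and S: "S \<subseteq> X" and s: "card S > 0" and \<Delta>: "\<Delta> > 0"
  shows "(\<Sum>\<omega>\<in>sign_vectors X. \<bar>real_of_int (rounded_sum S \<Delta> \<omega>)\<bar>) / card (sign_vectors X)
           \<le> sqrt (card S) / \<Delta> + 1/2"
proof -
  have n_pos: "real (card (sign_vectors X)) > 0"
    using finite_sign_vectors[OF X] sign_vectors_nonempty by (simp add: card_gt_0_iff)
  have "(\<Sum>\<omega>\<in>sign_vectors X. \<bar>real_of_int (rounded_sum S \<Delta> \<omega>)\<bar>)
      \<le> (\<Sum>\<omega>\<in>sign_vectors X. \<bar>spin_sum S \<omega>\<bar> / (2 * \<Delta>) + 1/2)"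
    by (intro sum_mono abs_rounded_sum_le \<Delta>)
  also have "\<dots> = (\<Sum>\<omega>\<in>sign_vectors X. \<bar>spin_sum S \<omega>\<bar>) / (2 * \<Delta>) + card (sign_vectors X) / 2"
    by (simp add: sum.distrib sum_divide_distrib)
  also have "\<dots> \<le> card (sign_vectors X) * (sqrt (card S) / \<Delta> + 1/2)"
    using divide_right_mono[OF sum_abs_spin_sum_le[OF X S s], of "2 * \<Delta>"] \<Delta>
    by (simp add: field_simps)
  finally show ?thesis using n_pos by (simp add: field_simps)
qed

lemma entropy_rounded_sum_le_ratio:
  fixes \<Delta> :: real
  assumes X: "finite X" and S: "S \<subseteq> X" and \<Delta>: "\<Delta> > 0" "\<Delta>^2 < card S"
  shows "entropy (sign_vectors X) (rounded_sum S \<Delta>) \<le> 75 * (card S / \<Delta>^2)"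
proof -
  have "0 \<le> \<Delta>^2" by simp
  then have s: "card S > 0" using \<Delta>(2) by linarith
  define J where "J = sqrt (card S) / \<Delta>"
  have J: "J > 1" unfolding J_def using \<Delta> real_less_rsqrt[OF \<Delta>(2)] by simp
  define r where "r = J / (J + 1)"
  have r: "0 < r" "r < 1" "(1 + r) / (1 - r) = 2 * J + 1" "1 / r = 1 + 1 / J"
    unfolding r_def using J by (auto simp: field_simps)
  have "entropy (sign_vectors X) (rounded_sum S \<Delta>)
      \<le> ln ((1 + r) / (1 - r)) + ln (1 / r) * ((\<Sum>\<omega>\<in>sign_vectors X. \<bar>real_of_int (rounded_sum S \<Delta> \<omega>)\<bar>) / card (sign_vectors X))"
    by (rule entropy_le_geometric[OF finite_sign_vectors[OF X] sign_vectors_nonempty]) (use r in auto)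
  also have "\<dots> \<le> 2 * J + (1 / J) * (J + 1/2)"
  proof (rule add_mono)
    show "ln ((1 + r) / (1 - r)) \<le> 2 * J"
      unfolding r(3) using ln_le_minus_one[of "2 * J + 1"] J by simp
    have "0 \<le> ln (1 / r)" "ln (1 / r) \<le> 1 / J"
      unfolding r(4) using J ln_le_minus_one[of "1 + 1 / J"] by (auto simp: add_pos_pos)
    then show "ln (1 / r) * ((\<Sum>\<omega>\<in>sign_vectors X. \<bar>real_of_int (rounded_sum S \<Delta> \<omega>)\<bar>) / card (sign_vectors X)) \<le> (1 / J) * (J + 1/2)"
      using mean_abs_rounded_sum_le[OF X S s \<Delta>(1)] J unfolding J_def[symmetric]
      by (intro mult_mono) (auto intro!: divide_nonneg_nonneg sum_nonneg)
  qed
  also have "(1 / J) * (J + 1/2) = 1 + 1 / (2 * J)" using J by (simp add: field_simps)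
  also have "2 * J + (1 + 1 / (2 * J)) \<le> 75 * J^2"
  proof -
    have "1 / (2 * J) \<le> 1" using J by (simp add: field_simps)
    moreover have "J \<le> J^2" using J by (simp add: power2_eq_square)
    ultimately show ?thesis using J by linarith
  qed
  also have "J^2 = card S / \<Delta>^2" unfolding J_def by (simp add: power_divide)
  finally show ?thesis .
qed

text \<open>Below \<Delta>^2 = |S| the bound is |S|/\<Delta>^2 up to a constant (and then
  exp (-\<Delta>^2/(4L)) \<ge> 3/4); above it, Hoeffding's tail makes the rounded sum almost always 0.\<close>

lemma entropy_rounded_sum_le:
  fixes \<Delta> L :: real
  assumes X: "finite X" and S: "S \<subseteq> X" and L: "card S \<le> L" and \<Delta>: "\<Delta> > 0"
  shows "entropy (sign_vectors X) (rounded_sum S \<Delta>) \<le> 100 * (card S / \<Delta>^2) * exp (- (\<Delta>^2) / (4 * L))"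
proof (cases "card S = 0")
  case True
  then have "S = {}" using finite_subset[OF S X] by simp
  then have "rounded_sum S \<Delta> = (\<lambda>_. 0)"
    using \<Delta> by (intro ext rounded_sum_eq_0) (simp_all add: spin_sum_def)
  then show ?thesis using True by simp
next
  case False
  then have s: "card S > 0" "L > 0" using L by auto
  show ?thesis
  proof (cases "card S \<le> \<Delta>^2")
    case True
    have "\<Delta>^2 / (4 * L) \<le> \<Delta>^2 / (4 * card S)"
      using L s by (intro divide_left_mono) auto
    then have "100 * (card S / \<Delta>^2) * exp (- (\<Delta>^2) / (4 * card S))
        \<le> 100 * (card S / \<Delta>^2) * exp (- (\<Delta>^2) / (4 * L))"
      by (intro mult_left_mono) auto
    with entropy_rounded_sum_le_tail[OF X S s(1) \<Delta> True] show ?thesis by simp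
  next
    case False
    have "\<Delta>^2 / (4 * L) \<le> L / (4 * L)" using False L s by (intro divide_right_mono) auto
    then have "\<Delta>^2 / (4 * L) \<le> 1/4" using s by simp
    then have "3/4 \<le> exp (- (\<Delta>^2) / (4 * L))"
      using exp_ge_add_one_self[of "- (\<Delta>^2) / (4 * L)"] by linarith
    then have "100 * (card S / \<Delta>^2) * (3/4) \<le> 100 * (card S / \<Delta>^2) * exp (- (\<Delta>^2) / (4 * L))"
      by (intro mult_left_mono) auto
    with entropy_rounded_sum_le_ratio[OF X S \<Delta>] False show ?thesis by simp
  qed
qed

section \<open>The entropy method\<close>

lemma card_hamming_ball_le:
  assumes X: "finite X" and \<omega>0: "\<omega>0 \<in> sign_vectors X"
  shows "card {\<omega>\<in>sign_vectors X. card {x\<in>X. \<omega> x \<noteq> \<omega>0 x} \<le> m} \<le> (\<Sum>k\<le>m. card X choose k)"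
proof -
  define B where "B = {\<omega>\<in>sign_vectors X. card {x\<in>X. \<omega> x \<noteq> \<omega>0 x} \<le> m}"
  define D where "D \<omega> = {x\<in>X. \<omega> x \<noteq> \<omega>0 x}" for \<omega> :: "'a \<Rightarrow> int"
  have "inj_on D B"
  proof (rule inj_onI)
    fix \<omega> \<omega>' assume "\<omega> \<in> B" "\<omega>' \<in> B" and D: "D \<omega> = D \<omega>'"
    then have \<omega>: "\<omega> \<in> sign_vectors X" "\<omega>' \<in> sign_vectors X" unfolding B_def by auto
    show "\<omega> = \<omega>'"
    proof
      fix x
      show "\<omega> x = \<omega>' x"
      proof (cases "x \<in> X")
        case False
        then show ?thesis using \<omega> unfolding sign_vectors_def by (simp add: PiE_def extensional_def)
      next
        case True
        have "(\<omega> x \<noteq> \<omega>0 x) = (\<omega>' x \<noteq> \<omega>0 x)" using D True unfolding D_def by blast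
        then show ?thesis
          using sign_vectors_value[OF \<omega>(1) True] sign_vectors_value[OF \<omega>(2) True]
            sign_vectors_value[OF \<omega>0 True] by auto
      qed
    qed
  qed
  then have "card B = card (D ` B)" by (simp add: card_image)
  also have "\<dots> \<le> card (\<Union>k\<in>{..m}. {S. S \<subseteq> X \<and> card S = k})"
  proof (rule card_mono)
    show "D ` B \<subseteq> (\<Union>k\<in>{..m}. {S. S \<subseteq> X \<and> card S = k})" unfolding B_def D_def by auto
  qed (use X in simp)
  also have "\<dots> \<le> (\<Sum>k\<le>m. card {S. S \<subseteq> X \<and> card S = k})" by (rule card_UN_le) simp
  also have "\<dots> = (\<Sum>k\<le>m. card X choose k)" using n_subsets[OF X] by simp
  finally show ?thesis unfolding B_def .
qed

lemma sum_binomial_le: "real (\<Sum>k\<le>m. n choose k) \<le> 9^m * (10/9)^n"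
proof -
  define g where "g k = real (n choose k) * (1/9)^k" for k
  have g0: "g k \<ge> 0" for k unfolding g_def by simp
  have "real (\<Sum>k\<le>m. n choose k) = (\<Sum>k\<le>m. g k * 9^k)"
    unfolding g_def by (simp add: power_one_over field_simps)
  also have "\<dots> \<le> (\<Sum>k\<le>m. g k * 9^m)"
    by (rule sum_mono) (use g0 in \<open>auto intro!: mult_left_mono power_increasing\<close>)
  also have "\<dots> = 9^m * (\<Sum>k\<le>m. g k)" by (simp add: sum_distrib_right[symmetric] mult.commute)
  also have "(\<Sum>k\<le>m. g k) \<le> (\<Sum>k\<le>m+n. g k)" by (rule sum_mono2) (use g0 in auto)
  also have "(\<Sum>k\<le>m+n. g k) = (\<Sum>k\<le>n. g k)"
    by (rule sum.mono_neutral_right) (auto simp: g_def binomial_eq_0)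
  also have "\<dots> = (1/9 + 1)^n" unfolding g_def by (subst binomial_ring) simp
  also have "(1/9 + 1 :: real) = 10/9" by simp
  finally show ?thesis by simp
qed

lemma ten_ninths_power_lt_exp: "9 * (10/9)^10 < 1024 * exp (- 5/2::real)"
proof -
  have "exp (5/2::real) \<le> exp 1 ^ 3" by (simp add: exp_of_nat_mult[symmetric])
  also have "\<dots> \<le> 3^3" by (intro power_mono exp_le) auto
  finally have "9 * (10/9)^10 * exp (5/2::real) \<le> 9 * (10/9)^10 * 27" by simp
  also have "\<dots> < 1024" by (simp add: power_divide)
  finally show ?thesis by (simp add: exp_minus field_simps)
qed

lemma binomial_bound_lt_two_power_exp:
  fixes n m :: nat
  assumes n: "n \<ge> 1" and m: "10 * m \<le> n"
  shows "9^m * (10/9)^n < 2^n * exp (- real n / 4)"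
proof (rule power_less_imp_less_base)
  have "(9^m * (10/9)^n)^10 = (9::real)^(10 * m) * ((10/9)^10)^n"
    by (simp only: power_mult_distrib power_mult[symmetric] mult.commute)
  also have "\<dots> \<le> 9^n * ((10/9)^10)^n" using m by (intro mult_right_mono power_increasing) auto
  also have "\<dots> = (9 * (10/9)^10)^n" by (simp only: power_mult_distrib)
  also have "\<dots> < (1024 * exp (- 5/2))^n" using ten_ninths_power_lt_exp n by (intro power_strict_mono) auto
  also have "\<dots> = (2^n * exp (- real n / 4))^10"
    using power_mult[of "2::real" 10 n]
    by (simp add: power_mult_distrib exp_of_nat_mult[symmetric] field_simps flip: power_mult)
  finally show "(9^m * (10/9)^n)^10 < (2^n * exp (- real n / 4))^10" .
qed simp

lemma exists_far_in_large_set: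
  assumes X: "finite X" "X \<noteq> {}" and C: "C \<subseteq> sign_vectors X" and \<omega>0: "\<omega>0 \<in> sign_vectors X"
    and large: "real (card C) \<ge> 2^card X * exp (- real (card X) / 4)"
  shows "\<exists>\<omega>1\<in>C. card X \<le> 10 * card {x\<in>X. \<omega>1 x \<noteq> \<omega>0 x}"
proof (rule ccontr)
  define n where "n = card X"
  have n: "n \<ge> 1" using X unfolding n_def by (simp add: Suc_le_eq card_gt_0_iff)
  define m where "m = (n - 1) div 10"
  assume near: "\<not> ?thesis"
  have "C \<subseteq> {\<omega>\<in>sign_vectors X. card {x\<in>X. \<omega> x \<noteq> \<omega>0 x} \<le> m}"
  proof
    fix \<omega> assume "\<omega> \<in> C"
    with near have "10 * card {x\<in>X. \<omega> x \<noteq> \<omega>0 x} < n" unfolding n_def by auto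
    then have "card {x\<in>X. \<omega> x \<noteq> \<omega>0 x} \<le> m" unfolding m_def by linarith
    with \<open>\<omega> \<in> C\<close> C show "\<omega> \<in> {\<omega>\<in>sign_vectors X. card {x\<in>X. \<omega> x \<noteq> \<omega>0 x} \<le> m}" by auto
  qed
  then have "card C \<le> card {\<omega>\<in>sign_vectors X. card {x\<in>X. \<omega> x \<noteq> \<omega>0 x} \<le> m}"
    by (rule card_mono[rotated]) (use finite_sign_vectors[OF X(1)] in simp)
  also have "\<dots> \<le> (\<Sum>k\<le>m. n choose k)" unfolding n_def by (rule card_hamming_ball_le[OF X(1) \<omega>0])
  finally have "real (card C) \<le> real (\<Sum>k\<le>m. n choose k)" by (simp only: of_nat_le_iff)
  also have "\<dots> \<le> 9^m * (10/9)^n" by (rule sum_binomial_le)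
  also have "\<dots> < 2^n * exp (- real n / 4)"
    by (rule binomial_bound_lt_two_power_exp[OF n]) (simp add: m_def)
  finally show False using large unfolding n_def by linarith
qed

text \<open>A fiber of the joint map has at least 2^n e^(-n/4) elements, more than a Hamming ball of
  radius n/10 can hold.\<close>

lemma exists_far_pair_same_values:
  fixes Y :: "'i \<Rightarrow> ('a \<Rightarrow> int) \<Rightarrow> 'b::zero"
  assumes X: "finite X" and I: "finite I"
    and H: "(\<Sum>i\<in>I. entropy (sign_vectors X) (Y i)) \<le> card X / 4"
  shows "\<exists>\<omega>0\<in>sign_vectors X. \<exists>\<omega>1\<in>sign_vectors X.
           (\<forall>i\<in>I. Y i \<omega>1 = Y i \<omega>0) \<and> card X \<le> 10 * card {x\<in>X. \<omega>1 x \<noteq> \<omega>0 x}"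
proof (cases "X = {}")
  case True
  then show ?thesis using sign_vectors_nonempty[of X] by auto
next
  case False
  let ?\<Omega> = "sign_vectors X"
  define F where "F \<omega> = (\<lambda>i. if i \<in> I then Y i \<omega> else 0)" for \<omega>
  have "entropy ?\<Omega> F \<le> card X / 4"
    using entropy_family_le[OF finite_sign_vectors[OF X] sign_vectors_nonempty I, of Y] H
    unfolding F_def by simp
  then have "exp (- real (card X) / 4) \<le> exp (- entropy ?\<Omega> F)" by simp
  then have bound: "2^card X * exp (- real (card X) / 4) \<le> 2^card X * exp (- entropy ?\<Omega> F)"
    by (intro mult_left_mono) auto
  obtain \<omega>0 where \<omega>0: "\<omega>0 \<in> ?\<Omega>"
    and fiber: "real (fiber_card ?\<Omega> F \<omega>0) \<ge> card ?\<Omega> * exp (- entropy ?\<Omega> F)"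
    using exists_large_fiber[OF finite_sign_vectors[OF X] sign_vectors_nonempty] by blast
  define C where "C = {\<omega>\<in>?\<Omega>. F \<omega> = F \<omega>0}"
  have "card C = fiber_card ?\<Omega> F \<omega>0" "card ?\<Omega> = 2^card X"
    unfolding C_def fiber_card_def card_sign_vectors[OF X] by simp_all
  with fiber have "real (card C) \<ge> 2^card X * exp (- entropy ?\<Omega> F)" by simp
  with bound have large: "real (card C) \<ge> 2^card X * exp (- real (card X) / 4)" by linarith
  have "C \<subseteq> ?\<Omega>" unfolding C_def by blast
  from exists_far_in_large_set[OF X False this \<omega>0 large]
  obtain \<omega>1 where "\<omega>1 \<in> C" "card X \<le> 10 * card {x\<in>X. \<omega>1 x \<noteq> \<omega>0 x}" by blast
  moreover have "Y i \<omega>1 = Y i \<omega>0" if "\<omega>1 \<in> C" "i \<in> I" for i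
    using fun_cong[of "F \<omega>1" "F \<omega>0" i] that unfolding C_def F_def by auto
  ultimately show ?thesis using \<omega>0 unfolding C_def by blast
qed

section \<open>Progressions and dyadic blocks\<close>

definition ap_point :: "int list \<Rightarrow> int list \<Rightarrow> int \<Rightarrow> int list" where
  "ap_point a b i = vadd a (vsmul i b)"

lemma length_ap_point: "length (ap_point a b i) = min (length a) (length b)"
  unfolding ap_point_def vadd_def vsmul_def by simp

lemma nth_ap_point: "c < length a \<Longrightarrow> c < length b \<Longrightarrow> ap_point a b i ! c = a!c + i * b!c"
  unfolding ap_point_def vadd_def vsmul_def by simp

lemma progression_eq_image: "progression a b l = (\<lambda>i. ap_point a b (int i)) ` {..<l}"
  unfolding progression_def ap_point_def by auto

lemma ap_point_ap_point: "length a = length b \<Longrightarrow> ap_point (ap_point a b i) b j = ap_point a b (i + j)"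
  by (rule nth_equalityI) (auto simp: length_ap_point nth_ap_point algebra_simps)

lemma ap_point_0: "length a = length b \<Longrightarrow> ap_point a b 0 = a"
  by (rule nth_equalityI) (auto simp: length_ap_point nth_ap_point)

lemma exists_nonzero_coord:
  assumes "b \<noteq> replicate (length b) 0"
  shows "\<exists>c<length b. b!c \<noteq> 0"
  using assms by (metis nth_equalityI length_replicate nth_replicate)

lemma ap_point_inj:
  assumes "length a = length b" "b \<noteq> replicate (length b) 0" "ap_point a b i = ap_point a b j"
  shows "i = j"
proof -
  obtain c where c: "c < length b" "b!c \<noteq> 0" using exists_nonzero_coord[OF assms(2)] by blast
  have "ap_point a b i ! c = ap_point a b j ! c" using assms(3) by simp
  then show ?thesis using c assms(1) by (simp add: nth_ap_point)
qed

lemma card_progression_le: "card (progression a b l) \<le> l"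
  unfolding progression_eq_image using card_image_le[of "{..<l}" "\<lambda>i. ap_point a b (int i)"] by simp

lemma finite_progression: "finite (progression a b l)"
  unfolding progression_eq_image by simp

lemma sum_progression:
  assumes "length a = length b" "b \<noteq> replicate (length b) 0"
  shows "(\<Sum>x\<in>progression a b l. g x) = (\<Sum>i<l. g (ap_point a b (int i)))"
proof -
  have "inj_on (\<lambda>i. ap_point a b (int i)) {..<l}"
  proof (rule inj_onI)
    fix i j assume "i \<in> {..<l}" "j \<in> {..<l}" "ap_point a b (int i) = ap_point a b (int j)"
    then have "int i = int j" using ap_point_inj[OF assms] by blast
    then show "i = j" by simp
  qed
  then show ?thesis unfolding progression_eq_image by (simp add: sum.reindex)
qed

lemma sum_progression_shift:
  assumes "length a = length b" "b \<noteq> replicate (length b) 0"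
  shows "(\<Sum>x\<in>progression (ap_point a b (int i)) b r. g x)
           = (\<Sum>j\<in>{t + i..<t + i + r}. g (ap_point a b (int j - int t)))"
proof -
  have "(\<Sum>x\<in>progression (ap_point a b (int i)) b r. g x) = (\<Sum>j<r. g (ap_point a b (int (i + j))))"
    using assms by (simp add: sum_progression length_ap_point ap_point_ap_point)
  also have "\<dots> = (\<Sum>j\<in>{0 + (t + i)..<r + (t + i)}. g (ap_point a b (int j - int t)))"
    unfolding sum.shift_bounds_nat_ivl by (simp add: lessThan_atLeast0 algebra_simps)
  finally show ?thesis by (simp add: add.commute)
qed

lemma length_grid: "x \<in> grid d N \<Longrightarrow> length x = d"
  unfolding grid_def by simp

lemma finite_grid: "finite (grid d N)"
proof -
  have "grid d N \<subseteq> {xs. set xs \<subseteq> {1..int N} \<and> length xs = d}"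
    unfolding grid_def by (auto simp: in_set_conv_nth)
  then show ?thesis by (rule finite_subset) (simp add: finite_lists_length_eq)
qed

text \<open>A nonzero direction b is read off at its first nonzero coordinate c; line_pos N b x is the
  position of x along the line in direction b, normalised so that the points of the grid on any
  such line have positions in [0, N - 1].\<close>

definition lead_coord :: "int list \<Rightarrow> nat" where
  "lead_coord b = (LEAST c. c < length b \<and> b!c \<noteq> 0)"

lemma lead_coord: "b \<noteq> replicate (length b) 0 \<Longrightarrow> lead_coord b < length b \<and> b!(lead_coord b) \<noteq> 0"
  unfolding lead_coord_def using exists_nonzero_coord by (metis (mono_tags, lifting) LeastI_ex)

definition line_pos :: "nat \<Rightarrow> int list \<Rightarrow> int list \<Rightarrow> int" where
  "line_pos N b x = (let c = lead_coord b in
     if b!c > 0 then (x!c - 1) div b!c else (int N - x!c) div (- b!c))"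

lemma line_pos_ap_point:
  assumes "length x = length b" "b \<noteq> replicate (length b) 0"
  shows "line_pos N b (ap_point x b i) = line_pos N b x + i"
proof -
  define c where "c = lead_coord b"
  have c: "c < length b" "b!c \<noteq> 0" using lead_coord[OF assms(2)] unfolding c_def by auto
  have "ap_point x b i ! c = x!c + i * b!c" using c assms(1) by (simp add: nth_ap_point)
  moreover have "(x!c + i * b!c - 1) div b!c = ((x!c - 1) + i * b!c) div b!c"
    by (simp add: algebra_simps)
  moreover have "((x!c - 1) + i * b!c) div b!c = (x!c - 1) div b!c + i"
    using c by simp
  moreover have "(int N - (x!c + i * b!c)) div (- b!c) = ((int N - x!c) + i * (- b!c)) div (- b!c)"
    by (simp add: algebra_simps)
  moreover have "((int N - x!c) + i * (- b!c)) div (- b!c) = i + (int N - x!c) div (- b!c)"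
    by (rule div_mult_self1) (use c in simp)
  ultimately show ?thesis unfolding line_pos_def Let_def c_def[symmetric] by simp
qed

lemma line_pos_grid:
  assumes "x \<in> grid d N" "length b = d" "b \<noteq> replicate d 0"
  shows "0 \<le> line_pos N b x \<and> line_pos N b x \<le> int N - 1"
proof -
  define c where "c = lead_coord b"
  have c: "c < d" "b!c \<noteq> 0" using lead_coord[of b] assms(2,3) unfolding c_def by auto
  have x: "1 \<le> x!c" "x!c \<le> int N" using assms(1) c unfolding grid_def by auto
  show ?thesis
  proof (cases "b!c > 0")
    case True
    have "(x!c - 1) div b!c \<le> (x!c - 1) div 1" using x True by (intro zdiv_mono2) auto
    moreover have "0 \<le> (x!c - 1) div b!c" using x True by (simp add: pos_imp_zdiv_nonneg_iff)
    ultimately show ?thesis unfolding line_pos_def Let_def c_def[symmetric] using True x by simp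
  next
    case False
    then have "- b!c > 0" using c by simp
    then have "(int N - x!c) div (- b!c) \<le> (int N - x!c) div 1"
      using x by (intro zdiv_mono2) auto
    moreover have "0 \<le> (int N - x!c) div (- b!c)"
      using x \<open>- b!c > 0\<close> by (simp add: pos_imp_zdiv_nonneg_iff)
    ultimately show ?thesis unfolding line_pos_def Let_def c_def[symmetric] using False x by simp
  qed
qed

lemma aligned_progressions_disjoint:
  assumes a: "a \<in> grid d N" and a': "a' \<in> grid d N" and b: "length b = d" "b \<noteq> replicate d 0"
    and dvd: "(2::int)^k dvd line_pos N b a" "(2::int)^k dvd line_pos N b a'" and "a \<noteq> a'"
  shows "progression a b (2^k) \<inter> progression a' b (2^k) = {}"
proof (rule ccontr)
  assume "progression a b (2^k) \<inter> progression a' b (2^k) \<noteq> {}"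
  then obtain i i' where ii: "i < 2^k" "i' < 2^k" "ap_point a b (int i) = ap_point a' b (int i')"
    unfolding progression_eq_image by auto
  have len: "length a = length b" "length a' = length b" using a a' b length_grid by auto
  have "a' = ap_point (ap_point a' b (int i')) b (- int i')" using len by (simp add: ap_point_ap_point ap_point_0)
  also have "\<dots> = ap_point (ap_point a b (int i)) b (- int i')" using ii(3) by simp
  also have "\<dots> = ap_point a b (int i - int i')" using len by (simp add: ap_point_ap_point)
  finally have a'_eq: "a' = ap_point a b (int i - int i')" .
  then have "line_pos N b a' = line_pos N b a + (int i - int i')"
    using line_pos_ap_point[OF len(1)] b by simp
  then have "(2::int)^k dvd (int i - int i')" using dvd by (metis add_diff_cancel_left' dvd_diff)
  moreover have "\<bar>int i - int i'\<bar> < int (2^k)" using ii by linarith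
  ultimately have "int i - int i' = 0"
    using dvd_imp_le_int[of "int i - int i'" "2^k"] by (cases "int i - int i' = 0") auto
  then show False using a'_eq len \<open>a \<noteq> a'\<close> by (simp add: ap_point_0)
qed

text \<open>An interval inside [t0, t1) \<subseteq> [0, 2^K) splits into at most two aligned dyadic blocks of each
  length 2^k, k < K, plus possibly one of length 2^K.\<close>

locale dyadic_block_bounds =
  fixes f :: "nat \<Rightarrow> real" and \<beta> :: "nat \<Rightarrow> real" and t0 t1 :: nat
  assumes beta_nonneg: "\<And>k. \<beta> k \<ge> 0"
    and block_bound: "\<And>k m. t0 \<le> m * 2^k \<Longrightarrow> (m + 1) * 2^k \<le> t1 \<Longrightarrow>
                        \<bar>\<Sum>j\<in>{m * 2^k..<(m + 1) * 2^k}. f j\<bar> \<le> \<beta> k"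
begin

lemma aligned_block_bound:
  assumes "2^k dvd c" "t0 \<le> c" "c + 2^k \<le> t1"
  shows "\<bar>\<Sum>j\<in>{c..<c + 2^k}. f j\<bar> \<le> \<beta> k"
proof -
  obtain m where m: "c = m * 2^k" using assms(1) by (metis dvd_def mult.commute)
  then have "\<bar>\<Sum>j\<in>{m * 2^k..<(m + 1) * 2^k}. f j\<bar> \<le> \<beta> k" using assms by (intro block_bound) auto
  then show ?thesis using m by (simp add: algebra_simps)
qed

lemma sum_beta_mono: "(\<Sum>k<K. \<beta> k) \<le> (\<Sum>k<Suc K. \<beta> k)"
  using beta_nonneg[of K] by simp

lemma aligned_prefix_bound:
  assumes "2^K dvd c" "r < 2^K" "t0 \<le> c" "c + r \<le> t1"
  shows "\<bar>\<Sum>j\<in>{c..<c + r}. f j\<bar> \<le> (\<Sum>k<K. \<beta> k)"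
  using assms
proof (induction K arbitrary: c r)
  case (Suc K)
  have dvd: "2^K dvd c" using Suc.prems(1) by (metis dvd_trans le_imp_power_dvd le_SucI order_refl)
  show ?case
  proof (cases "r < 2^K")
    case True
    then show ?thesis using Suc.IH[OF dvd True Suc.prems(3,4)] sum_beta_mono[of K] by linarith
  next
    case False
    have "(\<Sum>j\<in>{c..<c + r}. f j) = (\<Sum>j\<in>{c..<c + 2^K}. f j) + (\<Sum>j\<in>{c + 2^K..<c + 2^K + (r - 2^K)}. f j)"
      using False by (subst sum.atLeastLessThan_concat[symmetric, of c "c + 2^K"]) auto
    moreover have "\<bar>\<Sum>j\<in>{c..<c + 2^K}. f j\<bar> \<le> \<beta> K"
      using Suc.prems False dvd by (intro aligned_block_bound) auto
    moreover have "\<bar>\<Sum>j\<in>{c + 2^K..<c + 2^K + (r - 2^K)}. f j\<bar> \<le> (\<Sum>k<K. \<beta> k)"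
      using Suc.prems False dvd by (intro Suc.IH) auto
    ultimately show ?thesis by simp
  qed
qed simp

lemma aligned_suffix_bound:
  assumes "2^K dvd c" "r < 2^K" "u + r = c" "t0 \<le> u" "c \<le> t1"
  shows "\<bar>\<Sum>j\<in>{u..<c}. f j\<bar> \<le> (\<Sum>k<K. \<beta> k)"
  using assms
proof (induction K arbitrary: c r u)
  case (Suc K)
  have dvd: "2^K dvd c" using Suc.prems(1) by (metis dvd_trans le_imp_power_dvd le_SucI order_refl)
  show ?case
  proof (cases "r < 2^K")
    case True
    then show ?thesis using Suc.IH[OF dvd True Suc.prems(3-5)] sum_beta_mono[of K] by linarith
  next
    case False
    define c' where "c' = c - 2^K"
    have c': "c = c' + 2^K" "u \<le> c'" "2^K dvd c'"
      unfolding c'_def using False Suc.prems(3) dvd by (auto simp: dvd_diff_nat)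
    have "(\<Sum>j\<in>{u..<c}. f j) = (\<Sum>j\<in>{u..<c'}. f j) + (\<Sum>j\<in>{c'..<c' + 2^K}. f j)"
      unfolding c'(1) using c'(2) by (rule sum.atLeastLessThan_concat[symmetric]) simp
    moreover have "\<bar>\<Sum>j\<in>{c'..<c' + 2^K}. f j\<bar> \<le> \<beta> K"
      using Suc.prems c' by (intro aligned_block_bound) auto
    moreover have "\<bar>\<Sum>j\<in>{u..<c'}. f j\<bar> \<le> (\<Sum>k<K. \<beta> k)"
      using Suc.prems False c' by (intro Suc.IH[OF c'(3), of "r - 2^K"]) auto
    ultimately show ?thesis by simp
  qed
qed simp

lemma aligned_prefix_le_bound:
  assumes "2^K dvd c" "r \<le> 2^K" "t0 \<le> c" "c + r \<le> t1"
  shows "\<bar>\<Sum>j\<in>{c..<c + r}. f j\<bar> \<le> (\<Sum>k<Suc K. \<beta> k)"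
proof (cases "r = 2^K")
  case True
  then show ?thesis
    using aligned_block_bound[of K c] assms sum_nonneg[of "{..<K}" \<beta>] beta_nonneg by simp
next
  case False
  then show ?thesis using aligned_prefix_bound[of K c r] assms beta_nonneg[of K] by simp
qed

lemma aligned_suffix_le_bound:
  assumes "2^K dvd c" "r \<le> 2^K" "u + r = c" "t0 \<le> u" "c \<le> t1"
  shows "\<bar>\<Sum>j\<in>{u..<c}. f j\<bar> \<le> (\<Sum>k<Suc K. \<beta> k)"
proof (cases "r = 2^K")
  case True
  then have "2^K dvd u" using assms by (metis dvd_add_left_iff dvd_refl)
  then show ?thesis
    using aligned_block_bound[of K u] assms True sum_nonneg[of "{..<K}" \<beta>] beta_nonneg by simp
next
  case False
  then show ?thesis using aligned_suffix_bound[of K c r u] assms beta_nonneg[of K] by simp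
qed

lemma straddling_interval_bound:
  assumes "2^K dvd m" "u \<le> m" "m \<le> v" "m \<le> u + 2^K" "v \<le> m + 2^K" "t0 \<le> u" "v \<le> t1"
  shows "\<bar>\<Sum>j\<in>{u..<v}. f j\<bar> \<le> 2 * (\<Sum>k<Suc K. \<beta> k)"
proof -
  have "(\<Sum>j\<in>{u..<v}. f j) = (\<Sum>j\<in>{u..<m}. f j) + (\<Sum>j\<in>{m..<m + (v - m)}. f j)"
    using assms sum.atLeastLessThan_concat[of u m v f] by simp
  moreover have "\<bar>\<Sum>j\<in>{u..<m}. f j\<bar> \<le> (\<Sum>k<Suc K. \<beta> k)"
    using assms by (intro aligned_suffix_le_bound[of K m "m - u"]) auto
  moreover have "\<bar>\<Sum>j\<in>{m..<m + (v - m)}. f j\<bar> \<le> (\<Sum>k<Suc K. \<beta> k)"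
    using assms by (intro aligned_prefix_le_bound) auto
  ultimately show ?thesis by simp
qed

lemma interval_in_block_bound:
  assumes "q * 2^K \<le> u" "u \<le> v" "v \<le> (q + 1) * 2^K" "t0 \<le> u" "v \<le> t1"
  shows "\<bar>\<Sum>j\<in>{u..<v}. f j\<bar> \<le> \<beta> K + 2 * (\<Sum>k<K. \<beta> k)"
  using assms
proof (induction K arbitrary: q u v)
  case 0
  show ?case
  proof (cases "u = v")
    case True
    then show ?thesis using beta_nonneg[of 0] by simp
  next
    case False
    then have "u = q" "v = q + 1" using 0 by auto
    then show ?thesis using block_bound[of q 0] 0 by simp
  qed
next
  case (Suc K)
  let ?m = "(2 * q + 1) * 2^K"
  have mono: "\<beta> K + 2 * (\<Sum>k<K. \<beta> k) \<le> \<beta> (Suc K) + 2 * (\<Sum>k<Suc K. \<beta> k)"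
    using beta_nonneg[of K] beta_nonneg[of "Suc K"] by simp
  have q: "q * 2^Suc K = (2 * q) * 2^K" "(q + 1) * 2^Suc K = (2 * q + 1 + 1) * 2^K" by simp_all
  consider "v \<le> ?m" | "?m \<le> u" | "u \<le> ?m" "?m \<le> v" by linarith
  then show ?case
  proof cases
    case 1
    then show ?thesis using Suc.prems q Suc.IH[of "2 * q" u v] mono by auto
  next
    case 2
    then show ?thesis using Suc.prems q Suc.IH[of "2 * q + 1" u v] mono by auto
  next
    case 3
    then have "\<bar>\<Sum>j\<in>{u..<v}. f j\<bar> \<le> 2 * (\<Sum>k<Suc K. \<beta> k)"
      using Suc.prems q by (intro straddling_interval_bound[of K ?m]) (auto simp: algebra_simps)
    then show ?thesis using beta_nonneg[of "Suc K"] by simp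
  qed
qed

lemma interval_bound:
  assumes "t0 \<le> t1" "t1 \<le> 2^K"
  shows "\<bar>\<Sum>j\<in>{t0..<t1}. f j\<bar> \<le> \<beta> K + 2 * (\<Sum>k<K. \<beta> k)"
  using interval_in_block_bound[of 0 K t0 t1] assms by simp

end

text \<open>Step directions b admitting 2^k consecutive grid points (checked coordinatewise), the aligned
  starting points a of such blocks, and the family of all aligned dyadic blocks (k, b, a), each
  standing for progression a b (2^k).\<close>

definition dyadic_steps :: "nat \<Rightarrow> nat \<Rightarrow> nat \<Rightarrow> int list set" where
  "dyadic_steps d N k =
     {b. length b = d \<and> b \<noteq> replicate d 0 \<and> (\<forall>c<d. (2^k - 1) * \<bar>b!c\<bar> \<le> int N - 1)}"

definition aligned_starts :: "nat \<Rightarrow> nat \<Rightarrow> nat \<Rightarrow> int list \<Rightarrow> int list set" where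
  "aligned_starts d N k b =
     {a \<in> grid d N. (2::int)^k dvd line_pos N b a \<and> progression a b (2^k) \<subseteq> grid d N}"

definition dyadic_blocks :: "nat \<Rightarrow> nat \<Rightarrow> (nat \<times> int list \<times> int list) set" where
  "dyadic_blocks d N = (SIGMA k:{1..N}. SIGMA b:dyadic_steps d N k. aligned_starts d N k b)"

lemma dyadic_steps_subset:
  fixes d N k :: nat
  assumes "k \<ge> 1"
  defines "M \<equiv> (int N - 1) div (2^k - 1)"
  shows "dyadic_steps d N k \<subseteq> {xs. set xs \<subseteq> {-M..M} \<and> length xs = d}"
proof (rule subsetI, intro CollectI conjI)
  have den: "(2::int)^k - 1 > 0" using assms by (simp add: self_le_power)
  fix b assume b: "b \<in> dyadic_steps d N k"
  then show len: "length b = d" unfolding dyadic_steps_def by simp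
  show "set b \<subseteq> {-M..M}"
  proof
    fix y assume "y \<in> set b"
    then obtain c where c: "c < d" "b!c = y" using len by (auto simp: in_set_conv_nth)
    have "\<bar>y\<bar> = ((2^k - 1) * \<bar>y\<bar>) div (2^k - 1)" using den by simp
    also have "\<dots> \<le> M"
      unfolding M_def using b c den by (intro zdiv_mono1) (auto simp: dyadic_steps_def)
    finally show "y \<in> {-M..M}" by (simp add: abs_le_iff)
  qed
qed

lemma finite_dyadic_steps: "k \<ge> 1 \<Longrightarrow> finite (dyadic_steps d N k)"
  by (rule finite_subset[OF dyadic_steps_subset]) (simp_all add: finite_lists_length_eq)

lemma finite_aligned_starts: "finite (aligned_starts d N k b)"
  unfolding aligned_starts_def using finite_grid by simp

lemma finite_dyadic_blocks: "finite (dyadic_blocks d N)"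
  unfolding dyadic_blocks_def
  by (intro finite_SigmaI finite_dyadic_steps finite_aligned_starts) auto

lemma div_two_power_minus_one_le:
  assumes k: "k \<ge> 1" and N: "N \<ge> 1"
  shows "real_of_int ((int N - 1) div (2^k - 1)) \<le> 2 * real N / 2^k"
proof -
  have p: "(2::real) \<le> 2^k" using power_increasing[of 1 k "2::real"] k by simp
  have "real N * 2 \<le> real N * 2^k" using p by (intro mult_left_mono) auto
  then have "(real N - 1) * 2^k \<le> 2 * real N * (2^k - 1)" using p by (simp add: algebra_simps)
  then have "(real N - 1) * 2^k / ((2^k - 1) * 2^k) \<le> 2 * real N * (2^k - 1) / ((2^k - 1) * 2^k)"
    using p by (intro divide_right_mono) auto
  then have "(real N - 1) / (2^k - 1) \<le> 2 * real N / 2^k" using p by simp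
  moreover have "real_of_int ((int N - 1) div (2^k - 1)) \<le> real_of_int (int N - 1) / real_of_int (2^k - 1)"
    by (rule real_of_int_div4)
  ultimately show ?thesis by simp
qed

lemma card_dyadic_steps_le:
  assumes k: "k \<ge> 1" and N: "N \<ge> 1"
  shows "real (card (dyadic_steps d N k)) \<le> (5 * real N / 2^k)^d"
proof (cases "dyadic_steps d N k = {}")
  case False
  define M where "M = (int N - 1) div (2^k - 1)"
  have den: "(2::int)^k - 1 > 0" using k by (simp add: self_le_power)
  have "card (dyadic_steps d N k) \<le> card {xs. set xs \<subseteq> {-M..M} \<and> length xs = d}"
    unfolding M_def by (rule card_mono[OF _ dyadic_steps_subset[OF k]]) (simp add: finite_lists_length_eq)
  also have "\<dots> = nat (2 * M + 1) ^ d" by (simp add: card_lists_length_eq)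
  finally have card: "real (card (dyadic_steps d N k)) \<le> real (nat (2 * M + 1)) ^ d"
    by (metis of_nat_le_iff of_nat_power)
  text \<open>A nonzero coordinate of some step shows 2^k \<le> N.\<close>
  obtain b where b: "b \<in> dyadic_steps d N k" using False by blast
  then obtain c where c: "c < d" "b!c \<noteq> 0"
    using exists_nonzero_coord[of b] unfolding dyadic_steps_def by auto
  have "(2::int)^k - 1 \<le> (2^k - 1) * \<bar>b!c\<bar>" using c den by simp
  also have "\<dots> \<le> int N - 1" using b c unfolding dyadic_steps_def by auto
  finally have "real_of_int ((2::int)^k) \<le> real_of_int (int N)" by (simp only: of_int_le_iff)
  then have "1 \<le> real N / 2^k" by simp
  moreover have "real_of_int M \<le> 2 * real N / 2^k"
    unfolding M_def by (rule div_two_power_minus_one_le[OF k N])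
  moreover have "M \<ge> 0" unfolding M_def using N den by (simp add: pos_imp_zdiv_nonneg_iff)
  then have "real (nat (2 * M + 1)) = 2 * real_of_int M + 1" by simp
  ultimately have "real (nat (2 * M + 1)) \<le> 5 * real N / 2^k" by linarith
  then have "real (nat (2 * M + 1)) ^ d \<le> (5 * real N / 2^k)^d" by (intro power_mono) auto
  with card show ?thesis by (rule order_trans)
qed simp

lemma sum_card_aligned_blocks_le:
  assumes X: "finite X" and b: "b \<in> dyadic_steps d N k"
  shows "(\<Sum>a\<in>aligned_starts d N k b. card (progression a b (2^k) \<inter> X)) \<le> card X"
proof -
  have b': "length b = d" "b \<noteq> replicate d 0" using b unfolding dyadic_steps_def by auto
  have "(\<Sum>a\<in>aligned_starts d N k b. card (progression a b (2^k) \<inter> X))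
      = card (\<Union>a\<in>aligned_starts d N k b. progression a b (2^k) \<inter> X)"
  proof (rule card_UN_disjoint[symmetric])
    show "\<forall>a\<in>aligned_starts d N k b. \<forall>a'\<in>aligned_starts d N k b. a \<noteq> a' \<longrightarrow>
        (progression a b (2^k) \<inter> X) \<inter> (progression a' b (2^k) \<inter> X) = {}"
      using aligned_progressions_disjoint[OF _ _ b'] unfolding aligned_starts_def by blast
  qed (use X finite_aligned_starts in auto)
  also have "\<dots> \<le> card X" using X by (intro card_mono) auto
  finally show ?thesis .
qed

lemma progression_line_pos_bounds:
  assumes sub: "progression a b l \<subseteq> grid d N" and len: "length a = d" "length b = d"
    and b: "b \<noteq> replicate d 0" and l: "l \<ge> 1"
  shows "0 \<le> line_pos N b a" "line_pos N b a + int l \<le> int N"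
proof -
  have in_grid: "ap_point a b (int i) \<in> grid d N" if "i < l" for i
    using sub that unfolding progression_eq_image by auto
  show "0 \<le> line_pos N b a"
    using line_pos_grid[OF in_grid[of 0] len(2) b] len l by (simp add: ap_point_0)
  have "line_pos N b (ap_point a b (int (l - 1))) \<le> int N - 1"
    using line_pos_grid[OF in_grid[of "l - 1"] len(2) b] l by simp
  then show "line_pos N b a + int l \<le> int N"
    using line_pos_ap_point[of a b N "int (l - 1)"] len b l by simp
qed

lemma aligned_block_mem_dyadic_blocks:
  assumes sub: "progression a b l \<subseteq> grid d N" and len: "length a = d" "length b = d"
    and b: "b \<noteq> replicate d 0" and k: "k \<ge> 1" and i: "i + 2^k \<le> l"
    and dvd: "(2::int)^k dvd line_pos N b (ap_point a b (int i))"
  shows "(k, b, ap_point a b (int i)) \<in> dyadic_blocks d N"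
proof -
  define a' where "a' = ap_point a b (int i)"
  have len': "length a' = length b" unfolding a'_def using len by (simp add: length_ap_point)
  have shift: "ap_point a' b (int j) = ap_point a b (int (i + j))" for j
    unfolding a'_def using len by (simp add: ap_point_ap_point)
  have block: "ap_point a' b (int j) \<in> grid d N" if "j < 2^k" for j
  proof -
    have "i + j < l" using that i by linarith
    then show ?thesis using sub unfolding shift progression_eq_image by blast
  qed
  have a': "a' \<in> grid d N" using block[of 0] len' by (simp add: ap_point_0)
  have "k < 2^k" by simp
  moreover have "l \<le> N" using progression_line_pos_bounds[OF sub len b] i by fastforce
  ultimately have "k \<le> N" using i by linarith
  moreover have "b \<in> dyadic_steps d N k"
  proof -
    have "(2^k - 1) * \<bar>b!c\<bar> \<le> int N - 1" if c: "c < d" for c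
    proof -
      have "ap_point a' b (int (2^k - 1)) ! c = a'!c + (2^k - 1) * b!c"
        using c len len' by (simp add: nth_ap_point of_nat_diff)
      moreover have "1 \<le> a'!c" "a'!c \<le> int N"
        "1 \<le> ap_point a' b (int (2^k - 1)) ! c" "ap_point a' b (int (2^k - 1)) ! c \<le> int N"
        using a' block[of "2^k - 1"] c unfolding grid_def by auto
      ultimately have "\<bar>(2^k - 1) * b!c\<bar> \<le> int N - 1" by linarith
      then show ?thesis by (simp add: abs_mult)
    qed
    then show ?thesis unfolding dyadic_steps_def using len b by simp
  qed
  moreover have "a' \<in> aligned_starts d N k b"
    using a' block dvd unfolding aligned_starts_def a'_def[symmetric] progression_eq_image by auto
  ultimately show ?thesis using k unfolding dyadic_blocks_def a'_def by simp
qed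

text \<open>Index the points of the line through a in direction b by their absolute positions, so that
  aligned intervals of positions are exactly the aligned dyadic blocks.\<close>

lemma dyadic_block_bounds_along_line:
  fixes \<chi> :: "int list \<Rightarrow> int" and \<beta> :: "nat \<Rightarrow> real"
  assumes \<chi>: "\<And>x. \<bar>\<chi> x\<bar> \<le> 1" and \<beta>: "\<And>k. \<beta> k \<ge> 0"
    and blocks: "\<And>k b a. (k, b, a) \<in> dyadic_blocks d N \<Longrightarrow>
                   \<bar>real_of_int (chi_sum \<chi> (progression a b (2^k)))\<bar> \<le> \<beta> k"
    and sub: "progression a b l \<subseteq> grid d N" and len: "length a = d" "length b = d"
    and b: "b \<noteq> replicate d 0" and t0: "int t0 = line_pos N b a"
  shows "dyadic_block_bounds (\<lambda>j. real_of_int (\<chi> (ap_point a b (int j - int t0))))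
           (\<lambda>k. if k = 0 then 1 else \<beta> k) t0 (t0 + l)"
proof
  have len': "length a = length b" "b \<noteq> replicate (length b) 0" using len b by auto
  show "(if k = 0 then 1 else \<beta> k) \<ge> 0" for k using \<beta> by simp
  fix k m assume block: "t0 \<le> m * 2^k" "(m + 1) * 2^k \<le> t0 + l"
  show "\<bar>\<Sum>j\<in>{m * 2^k..<(m + 1) * 2^k}. real_of_int (\<chi> (ap_point a b (int j - int t0)))\<bar>
      \<le> (if k = 0 then 1 else \<beta> k)"
  proof (cases "k = 0")
    case True
    then show ?thesis using \<chi> by (simp flip: of_int_abs)
  next
    case False
    define i where "i = m * 2^k - t0"
    have i: "t0 + i = m * 2^k" "i + 2^k \<le> l" unfolding i_def using block by auto
    have "line_pos N b (ap_point a b (int i)) = int (m * 2^k)"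
      using line_pos_ap_point[OF len'] t0 arg_cong[OF i(1), of int] by simp
    then have "(k, b, ap_point a b (int i)) \<in> dyadic_blocks d N"
      using False by (intro aligned_block_mem_dyadic_blocks[OF sub len b _ i(2)]) auto
    from blocks[OF this] False show ?thesis
      unfolding chi_sum_def sum_progression_shift[OF len', of _ i _ t0] i(1)
      by (simp add: algebra_simps)
  qed
qed

lemma chi_sum_AP_le_dyadic_blocks:
  fixes \<chi> :: "int list \<Rightarrow> int" and \<beta> :: "nat \<Rightarrow> real"
  assumes \<chi>: "\<And>x. \<bar>\<chi> x\<bar> \<le> 1" and \<beta>: "\<And>k. \<beta> k \<ge> 0"
    and blocks: "\<And>k b a. (k, b, a) \<in> dyadic_blocks d N \<Longrightarrow>
                   \<bar>real_of_int (chi_sum \<chi> (progression a b (2^k)))\<bar> \<le> \<beta> k"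
    and A0: "A0 \<in> APs d N"
  shows "\<bar>real_of_int (chi_sum \<chi> A0)\<bar> \<le> 2 * (1 + (\<Sum>k\<in>{1..N}. \<beta> k))"
proof -
  obtain a b l where A0_eq: "A0 = progression a b l" and len: "length a = d" "length b = d"
    and b: "b \<noteq> replicate d 0" and l: "l \<ge> 1" and sub: "progression a b l \<subseteq> grid d N"
    using A0 unfolding APs_def by blast
  have len': "length a = length b" "b \<noteq> replicate (length b) 0" using len b by auto
  define t0 where "t0 = nat (line_pos N b a)"
  have t0: "int t0 = line_pos N b a" "t0 + l \<le> N"
    using progression_line_pos_bounds[OF sub len b l] unfolding t0_def by auto
  define \<beta>' where "\<beta>' k = (if k = 0 then 1 else \<beta> k)" for k
  interpret dyadic_block_bounds "\<lambda>j. real_of_int (\<chi> (ap_point a b (int j - int t0)))" \<beta>' t0 "t0 + l"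
    unfolding \<beta>'_def by (rule dyadic_block_bounds_along_line[OF \<chi> \<beta> blocks sub len b t0(1)])
  have "N < 2^N" by simp
  then have "\<bar>\<Sum>j\<in>{t0..<t0 + l}. real_of_int (\<chi> (ap_point a b (int j - int t0)))\<bar>
      \<le> \<beta>' N + 2 * (\<Sum>k<N. \<beta>' k)"
    by (intro interval_bound) (use t0(2) in linarith)+
  also have "\<dots> \<le> 2 * (\<Sum>k<Suc N. \<beta>' k)" using \<beta>[of N] by (simp add: \<beta>'_def)
  also have "(\<Sum>k<Suc N. \<beta>' k) = 1 + (\<Sum>k\<in>{1..N}. \<beta> k)"
    unfolding \<beta>'_def lessThan_Suc_atMost atMost_atLeast0
    by (simp add: sum.atLeast_Suc_atMost[of 0] atLeastSucAtMost_greaterThanAtMost)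
  finally show ?thesis
    using sum_progression_shift[OF len', where i = 0 and r = l and t = t0 and g = "\<lambda>x. real_of_int (\<chi> x)"]
    unfolding A0_eq chi_sum_def by (simp add: ap_point_0[OF len'(1)])
qed

section \<open>Thresholds and the entropy budget\<close>

lemma level_budget_long_blocks:
  fixes t d :: nat assumes d: "d \<ge> 1"
  shows "(1/64) * (1/2)^(t*d) * (64/49)^t \<le> (1/20) * ((2/3)::real)^t"
proof -
  have "(1/2::real)^(t*d) \<le> (1/2)^t" using d by (intro power_decreasing) auto
  then have "(1/64) * (1/2::real)^(t*d) * (64/49)^t \<le> (1/64) * (1/2)^t * (64/49)^t"
    by (intro mult_right_mono) auto
  also have "\<dots> = (1/64) * (32/49)^t" by (simp add: power_mult_distrib[symmetric])
  also have "\<dots> \<le> (1/64) * (2/3)^t" by (intro mult_left_mono power_mono) auto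
  also have "\<dots> \<le> (1/20) * (2/3)^t" by (intro mult_right_mono) auto
  finally show ?thesis .
qed

lemma two_power_le_exp: "(2::real)^n \<le> exp (real n)"
proof -
  have "(2::real)^n \<le> exp 1 ^ n"
    using exp_ge_add_one_self[of 1] by (intro power_mono) auto
  then show ?thesis by (simp add: exp_of_nat_mult[symmetric])
qed

lemma level_budget_short_blocks:
  fixes t d :: nat
  shows "(1/64) * exp (-1600*(real d+1)*(49/32)^t) * 2^(t*d) * (64/49)^t \<le> (1/20) * ((2/3)::real)^t"
proof -
  have "((64/49)::real)^t * (3/2)^t = (96/49)^t" by (simp flip: power_mult_distrib)
  also have "\<dots> \<le> 4^t" by (intro power_mono) auto
  also have "\<dots> = 2^(2 * t)" by (simp add: power_mult)
  finally have "(2::real)^(t*d) * ((64/49)^t * (3/2)^t) \<le> 2^(t*d) * 2^(2 * t)"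
    by (intro mult_left_mono) auto
  also have "\<dots> = 2^(t * (d + 2))" by (simp add: algebra_simps flip: power_add)
  also have "\<dots> \<le> exp (real (t * (d + 2)))" by (rule two_power_le_exp)
  finally have growth: "(2::real)^(t*d) * (64/49)^t * (3/2)^t \<le> exp (real (t * (d + 2)))"
    by (simp only: mult.assoc)
  have "1 + real t * (17/32) \<le> ((49/32)::real)^t"
    using Bernoulli_inequality[of "17/32::real" t] by simp
  then have "real t * (real d + 2) \<le> (2 * (49/32)^t) * (4 * (real d + 1))"
    by (intro mult_mono) auto
  also have "\<dots> = 8 * ((real d + 1) * (49/32)^t)" by (simp add: mult_ac)
  also have "\<dots> \<le> 1600 * ((real d + 1) * (49/32)^t)" by (intro mult_right_mono) auto
  finally have "real t * (real d + 2) \<le> 1600 * ((real d + 1) * (49/32)^t)" .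
  then have "exp (-1600*(real d+1)*(49/32)^t) * exp (real (t * (d + 2))) \<le> 1"
    by (simp add: mult.assoc flip: exp_add) (simp add: algebra_simps)
  moreover have "exp (-1600*(real d+1)*(49/32)^t) * ((2::real)^(t*d) * (64/49)^t * (3/2)^t)
      \<le> exp (-1600*(real d+1)*(49/32)^t) * exp (real (t * (d + 2)))"
    using growth by (intro mult_left_mono) auto
  ultimately have bound: "exp (-1600*(real d+1)*(49/32)^t) * ((2::real)^(t*d) * (64/49)^t * (3/2)^t) \<le> 1"
    by linarith
  have "(1/64) * exp (-1600*(real d+1)*(49/32)^t) * 2^(t*d) * (64/49)^t
      = (1/64) * (exp (-1600*(real d+1)*(49/32)^t) * ((2::real)^(t*d) * (64/49)^t * (3/2)^t)) * (2/3)^t"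
    by (simp add: power_mult_distrib[symmetric])
  also have "\<dots> \<le> (1/20) * (2/3)^t"
    using bound by (intro mult_right_mono) (linarith, simp)
  finally show ?thesis .
qed

text \<open>At the scale 2^K0, where the number (5N/2^k)^d of step directions drops below the block
  length 2^k, the threshold is a constant times sqrt (d + 1) times the standard deviation
  sqrt (2^K0) of a block sum; away from it, it decays geometrically, so that the thresholds sum to
  the same order.\<close>

definition threshold :: "nat \<Rightarrow> nat \<Rightarrow> nat \<Rightarrow> real" where
  "threshold d K0 k = 80 * sqrt (real d + 1) * sqrt (2^K0) * (7/8)^(nat \<bar>int k - int K0\<bar>)"

lemma threshold_pos: "threshold d K0 k > 0"
  unfolding threshold_def by simp

lemma threshold_sq: "threshold d K0 k ^ 2 = 6400 * (real d + 1) * 2^K0 * (49/64)^(nat \<bar>int k - int K0\<bar>)"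
proof -
  define t where "t = nat \<bar>int k - int K0\<bar>"
  have "((7/8::real)^t)^2 = ((7/8)^2)^t" by (metis power_mult mult.commute)
  moreover have "(7/8::real)^2 = 49/64" by (simp add: power2_eq_square)
  ultimately show ?thesis unfolding threshold_def t_def[symmetric] by (simp add: power_mult_distrib)
qed

lemma level_budget_le_scale_ratio:
  fixes d K0 k N :: nat
  assumes KK: "real ((5 * N)^d) \<le> 2^(K0 * (d + 1))"
  defines "D \<equiv> threshold d K0 k" and "E \<equiv> exp (- (threshold d K0 k ^ 2) / (4 * 2^k))"
    and "t \<equiv> nat \<bar>int k - int K0\<bar>"
  shows "100 * E / D^2 * (5 * real N / 2^k)^d \<le> (1/64) * E * (2^K0 / 2^k)^d * (64/49)^t"
proof -
  have D2: "D^2 = 6400 * (real d + 1) * 2^K0 * (49/64)^t" unfolding D_def t_def by (rule threshold_sq)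
  have E: "E > 0" unfolding E_def by simp
  have "(5 * real N / 2^k)^d = real ((5 * N)^d) / (2^k)^d" by (simp add: power_divide)
  also have "\<dots> \<le> 2^K0 * (2^K0)^d / (2^k)^d"
    using KK by (intro divide_right_mono) (auto simp: power_mult[symmetric] power_add mult.commute)
  finally have "100 * E / D^2 * (5 * real N / 2^k)^d \<le> 100 * E / D^2 * (2^K0 * (2^K0)^d / (2^k)^d)"
    using E D2 by (intro mult_left_mono) auto
  also have "\<dots> = (1/64) * E * ((2^K0)^d / (2^k)^d) * (1 / (49/64)^t) / (real d + 1)"
  proof -
    have aux: "100 * E / (6400 * c * L * q) * (L * A / B) = (1/64) * E * (A / B) * (1 / q) / c"
      if "q > 0" "L > 0" "c > 0" for q c A B L :: real using that by (simp add: field_simps)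
    show ?thesis unfolding D2 by (rule aux) auto
  qed
  also have "\<dots> = (1/64) * E * (2^K0 / 2^k)^d * (64/49)^t / (real d + 1)"
    by (simp add: power_divide)
  also have "\<dots> \<le> (1/64) * E * (2^K0 / 2^k)^d * (64/49)^t"
    using E by (intro divide_left_mono[of 1, simplified]) auto
  finally show ?thesis .
qed

lemma threshold_sq_div_below_scale:
  assumes K0: "K0 = k + t"
  shows "threshold d K0 k ^ 2 / (4 * 2^k) = 1600 * (real d + 1) * (49/32)^t"
proof -
  have aux: "6400 * c * L * q / (4 * B) = 1600 * c * (L * q / B)" if "B > 0" for c L q B :: real
    using that by (simp add: field_simps)
  have t: "nat \<bar>int k - int K0\<bar> = t" using K0 by simp
  have "threshold d K0 k ^ 2 / (4 * 2^k) = 1600 * (real d + 1) * ((2::real)^K0 * (49/64)^t / 2^k)"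
    unfolding threshold_sq t by (intro aux) simp
  also have "(2::real)^K0 * (49/64)^t / 2^k = (49/32)^t"
    unfolding K0 by (simp add: power_add flip: power_mult_distrib)
  finally show ?thesis .
qed

lemma level_budget:
  fixes d K0 k N :: nat
  assumes d: "d \<ge> 1" and KK: "real ((5 * N)^d) \<le> 2^(K0 * (d + 1))"
  defines "t \<equiv> nat \<bar>int k - int K0\<bar>"
  shows "100 * exp (- (threshold d K0 k ^ 2) / (4 * 2^k)) / threshold d K0 k ^ 2 * (5 * real N / 2^k)^d
           \<le> (1/20) * (2/3)^t"
proof -
  define E where "E = exp (- (threshold d K0 k ^ 2) / (4 * 2^k))"
  have "100 * E / threshold d K0 k ^ 2 * (5 * real N / 2^k)^d \<le> (1/64) * E * (2^K0 / 2^k)^d * (64/49)^t"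
    unfolding E_def t_def by (rule level_budget_le_scale_ratio[OF KK])
  also have "\<dots> \<le> (1/20) * (2/3)^t"
  proof (cases "K0 \<le> k")
    case True
    then have "k = K0 + t" unfolding t_def by simp
    then have "(2::real)^K0 / 2^k = (1/2)^t" by (simp add: power_add power_one_over)
    then have G: "(2^K0 / 2^k :: real)^d = (1/2)^(t * d)" by (simp add: power_mult)
    have "E \<le> 1" unfolding E_def by simp
    then have "(1/64) * E * (2^K0 / 2^k)^d * (64/49)^t \<le> (1/64) * 1 * (1/2)^(t * d) * (64/49)^t"
      unfolding G by (intro mult_right_mono) auto
    then show ?thesis using level_budget_long_blocks[OF d, of t] by linarith
  next
    case False
    then have K0: "K0 = k + t" unfolding t_def by simp
    then have "(2::real)^K0 / 2^k = 2^t" by (simp add: power_add)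
    then have "(2^K0 / 2^k :: real)^d = 2^(t * d)" by (simp add: power_mult)
    moreover have "E = exp (- 1600 * (real d + 1) * (49/32)^t)"
      unfolding E_def minus_divide_left[symmetric] threshold_sq_div_below_scale[OF K0]
      by (simp only: mult_minus_left)
    ultimately show ?thesis using level_budget_short_blocks[of d t] by simp
  qed
  finally show ?thesis unfolding E_def .
qed
lemma sum_power_dist_le:
  fixes r :: real and F :: "nat set"
  assumes r: "0 < r" "r < 1" and F: "finite F"
  shows "(\<Sum>k\<in>F. r ^ nat \<bar>int k - int K0\<bar>) \<le> (1+r)/(1-r)"
proof -
  have inj: "inj_on (\<lambda>k. int k - int K0) F" by (auto simp: inj_on_def)
  have "(\<Sum>k\<in>F. r ^ nat \<bar>int k - int K0\<bar>) = (\<Sum>j\<in>(\<lambda>k. int k - int K0) ` F. r ^ nat \<bar>j\<bar>)"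
    by (simp add: sum.reindex[OF inj])
  also have "\<dots> \<le> (1+r)/(1-r)" by (rule sum_power_abs_le[OF r]) (use F in simp)
  finally show ?thesis .
qed

lemma exists_least_scale:
  fixes d N :: nat
  shows "\<exists>K0. (5*N)^d \<le> 2^(K0*(d+1)) \<and> (K0 = 0 \<or> 2^((K0-1)*(d+1)) < (5*N)^d)"
proof -
  let ?P = "\<lambda>k. (5*N)^d \<le> (2::nat)^(k*(d+1))"
  have ex: "?P (5*N)"
  proof -
    have "(5*N)^d \<le> (2^(5*N))^d" by (intro power_mono) (simp_all add: less_imp_le)
    also have "\<dots> = 2^(5*N*d)" by (simp add: power_mult)
    also have "\<dots> \<le> 2^(5*N*(d+1))" by (intro power_increasing) auto
    finally show ?thesis .
  qed
  define K0 where "K0 = (LEAST k. ?P k)"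
  have a: "?P K0" unfolding K0_def by (rule LeastI[where P="?P", OF ex])
  have b: "K0 = 0 \<or> 2^((K0-1)*(d+1)) < (5*N)^d"
  proof (cases "K0 = 0")
    case False
    then have "K0 - 1 < K0" by simp
    then have "\<not> ?P (K0 - 1)" unfolding K0_def by (rule not_less_Least)
    then show ?thesis by simp
  qed simp
  show ?thesis using a b by blast
qed

lemma sqrt_scale_le:
  fixes d N K0 :: nat
  assumes N: "N \<ge> 1" and least: "K0 = 0 \<or> 2^((K0 - 1) * (d + 1)) < (5 * N)^d"
  shows "sqrt (2^K0) \<le> sqrt 10 * real N powr (real d / (2 * real d + 2))"
proof -
  have "((2::real)^K0)^(d + 1) \<le> 10^(d + 1) * real N ^ d"
  proof (cases K0)
    case 0
    have "(1::real) * 1 \<le> 10^(d + 1) * real N ^ d"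
      using N by (intro mult_mono one_le_power) auto
    then show ?thesis using 0 by simp
  next
    case (Suc K1)
    then have "(2::nat)^(K1 * (d + 1)) < (5 * N)^d" using least by simp
    then have "real (2^(K1 * (d + 1))) \<le> real ((5 * N)^d)" by (simp only: of_nat_le_iff less_imp_le)
    then have "(2::real)^(K1 * (d + 1)) \<le> (5 * real N)^d" by simp
    then have "((2::real)^K0)^(d + 1) \<le> 2^(d + 1) * (5 * real N)^d"
      unfolding Suc by (simp add: power_mult[symmetric] power_add mult.commute)
    also have "\<dots> = 2^(d + 1) * 5^d * real N ^ d" by (simp add: power_mult_distrib)
    also have "\<dots> \<le> 2^(d + 1) * 5^(d + 1) * real N ^ d"
      by (intro mult_right_mono mult_left_mono power_increasing) auto
    also have "\<dots> = 10^(d + 1) * real N ^ d" by (simp flip: power_mult_distrib)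
    finally show ?thesis .
  qed
  also have "real N ^ d = (real N powr (real d / real (d + 1)))^(d + 1)"
  proof -
    have "real (d + 1) * (real d / real (d + 1)) = real d" by simp
    then show ?thesis using N by (subst powr_power) (simp_all add: powr_realpow)
  qed
  also have "10^(d + 1) * \<dots> = (10 * real N powr (real d / real (d + 1)))^(d + 1)"
    by (simp only: power_mult_distrib)
  finally have "2^K0 \<le> 10 * real N powr (real d / real (d + 1))"
    by (subst (asm) power_mono_iff) auto
  then have "sqrt (2^K0) \<le> sqrt 10 * sqrt (real N powr (real d / real (d + 1)))"
    by (simp flip: real_sqrt_mult)
  also have "sqrt (real N powr (real d / real (d + 1))) = real N powr (real d / (2 * real d + 2))"
    using powr_half_sqrt_powr[of "real N" "real d / real (d + 1)"] by (simp add: field_simps)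
  finally show ?thesis .
qed

lemma discrepancy_constant_le:
  fixes d N :: nat and s :: real
  assumes N: "N \<ge> 1" and s: "s \<le> sqrt 10 * real N powr (real d / (2 * real d + 2))"
  shows "2 + 2400 * sqrt (real d + 1) * s \<le> (500 * real d + 10^6) * real N powr (real d / (2 * real d + 2))"
proof -
  let ?p = "real N powr (real d / (2 * real d + 2))"
  have p1: "?p \<ge> 1" using N by (intro ge_one_powr_ge_zero) auto
  define z where "z = sqrt (real d + 1)"
  have z0: "z \<ge> 0" unfolding z_def by simp
  have zz: "z^2 = real d + 1" unfolding z_def by simp
  have s10: "sqrt 10 \<le> (4::real)" by (rule real_le_lsqrt) auto
  have "2400 * z * s \<le> 2400 * z * (4 * ?p)"
  proof -
    have "s \<le> 4 * ?p" using mult_right_mono[OF s10, of ?p] p1 s by linarith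
    then show ?thesis using z0 by (intro mult_left_mono) auto
  qed
  moreover have "2400 * z * (4 * ?p) = 9600 * z * ?p" by simp
  ultimately have a: "2 + 2400 * z * s \<le> 2 * ?p + 9600 * z * ?p" using p1 by linarith
  have "9600 * z \<le> 500 * z^2 + 46080"
  proof -
    have "0 \<le> 500 * (z - 48/5)^2" by simp
    also have "500 * (z - 48/5)^2 = 500 * z^2 - 9600 * z + 46080" by (simp add: power2_eq_square algebra_simps)
    finally show ?thesis by simp
  qed
  then have "2 + 9600 * z \<le> 500 * real d + 10^6" using zz by simp
  then have "(2 + 9600 * z) * ?p \<le> (500 * real d + 10^6) * ?p" using p1 by (intro mult_right_mono) auto
  then show ?thesis using a unfolding z_def by (simp add: algebra_simps)
qed

lemma sum_threshold_le: "(\<Sum>k\<in>{1..N}. threshold d K0 k) \<le> 1200 * sqrt (real d + 1) * sqrt (2^K0)"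
proof -
  have "(\<Sum>k\<in>{1..N}. ((7::real) / 8)^(nat \<bar>int k - int K0\<bar>)) \<le> (1 + 7/8) / (1 - 7/8)"
    by (rule sum_power_dist_le) auto
  then have "80 * sqrt (real d + 1) * sqrt (2^K0) * (\<Sum>k\<in>{1..N}. ((7::real) / 8)^(nat \<bar>int k - int K0\<bar>))
      \<le> 80 * sqrt (real d + 1) * sqrt (2^K0) * 15"
    by (intro mult_left_mono) auto
  then show ?thesis unfolding threshold_def by (simp add: sum_distrib_left)
qed

lemma entropy_aligned_blocks_le:
  fixes \<Delta> :: real
  assumes X: "finite X" and b: "b \<in> dyadic_steps d N k" and \<Delta>: "\<Delta> > 0"
  shows "(\<Sum>a\<in>aligned_starts d N k b. entropy (sign_vectors X) (rounded_sum (progression a b (2^k) \<inter> X) \<Delta>))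
           \<le> 100 * exp (- (\<Delta>^2) / (4 * 2^k)) / \<Delta>^2 * card X"
proof -
  let ?P = "\<lambda>a. progression a b (2^k) \<inter> X" and ?\<alpha> = "100 * exp (- (\<Delta>^2) / (4 * 2^k)) / \<Delta>^2"
  have "entropy (sign_vectors X) (rounded_sum (?P a) \<Delta>) \<le> ?\<alpha> * card (?P a)" for a
  proof -
    have "card (?P a) \<le> card (progression a b (2^k))" by (rule card_mono[OF finite_progression]) auto
    also have "\<dots> \<le> 2^k" by (rule card_progression_le)
    finally have "real (card (?P a)) \<le> 2^k" by (simp flip: of_nat_le_iff)
    from entropy_rounded_sum_le[OF X _ this \<Delta>] show ?thesis by (simp add: field_simps)
  qed
  then have "(\<Sum>a\<in>aligned_starts d N k b. entropy (sign_vectors X) (rounded_sum (?P a) \<Delta>))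
      \<le> ?\<alpha> * (\<Sum>a\<in>aligned_starts d N k b. real (card (?P a)))"
    by (simp add: sum_distrib_left sum_mono)
  also have "\<dots> \<le> ?\<alpha> * card X"
    using sum_card_aligned_blocks_le[OF X b] by (intro mult_left_mono) (simp_all flip: of_nat_sum)
  finally show ?thesis .
qed

lemma entropy_dyadic_blocks_le:
  assumes N: "N \<ge> 1" and d: "d \<ge> 1" and X: "X \<subseteq> grid d N"
    and K0: "real ((5 * N)^d) \<le> 2^(K0 * (d + 1))"
  shows "(\<Sum>(k, b, a)\<in>dyadic_blocks d N. entropy (sign_vectors X)
           (rounded_sum (progression a b (2^k) \<inter> X) (threshold d K0 k))) \<le> card X / 4"
proof -
  have finX: "finite X" using X finite_grid finite_subset by blast
  let ?n = "real (card X)"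
  define \<alpha> where "\<alpha> k = 100 * exp (- (threshold d K0 k ^ 2) / (4 * 2^k)) / threshold d K0 k ^ 2" for k
  have "(\<Sum>(k, b, a)\<in>dyadic_blocks d N. entropy (sign_vectors X)
           (rounded_sum (progression a b (2^k) \<inter> X) (threshold d K0 k)))
      = (\<Sum>k\<in>{1..N}. \<Sum>b\<in>dyadic_steps d N k. \<Sum>a\<in>aligned_starts d N k b.
           entropy (sign_vectors X) (rounded_sum (progression a b (2^k) \<inter> X) (threshold d K0 k)))"
    unfolding dyadic_blocks_def
    by (simp add: sum.Sigma finite_dyadic_steps finite_aligned_starts finite_SigmaI)
  also have "\<dots> \<le> (\<Sum>k\<in>{1..N}. \<Sum>b\<in>dyadic_steps d N k. \<alpha> k * ?n)"
    unfolding \<alpha>_def by (intro sum_mono entropy_aligned_blocks_le[OF finX _ threshold_pos])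
  also have "\<dots> = (\<Sum>k\<in>{1..N}. \<alpha> k * card (dyadic_steps d N k) * ?n)"
    by (simp add: algebra_simps)
  also have "\<dots> \<le> (\<Sum>k\<in>{1..N}. (1/20) * (2/3)^(nat \<bar>int k - int K0\<bar>) * ?n)"
  proof (intro sum_mono mult_right_mono)
    fix k assume "k \<in> {1..N}"
    then have "\<alpha> k * card (dyadic_steps d N k) \<le> \<alpha> k * (5 * real N / 2^k)^d"
      using card_dyadic_steps_le[OF _ N] by (intro mult_left_mono) (auto simp: \<alpha>_def)
    also have "\<dots> \<le> (1/20) * (2/3)^(nat \<bar>int k - int K0\<bar>)"
      using level_budget[OF d K0, of k] unfolding \<alpha>_def by simp
    finally show "\<alpha> k * card (dyadic_steps d N k) \<le> (1/20) * (2/3)^(nat \<bar>int k - int K0\<bar>)" .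
  qed simp
  also have "\<dots> = (1/20) * ?n * (\<Sum>k\<in>{1..N}. (2/3)^(nat \<bar>int k - int K0\<bar>))"
    by (simp add: sum_distrib_left algebra_simps)
  also have "\<dots> \<le> (1/20) * ?n * 5"
    using sum_power_dist_le[of "2/3" "{1..N}" K0] by (intro mult_left_mono) auto
  finally show ?thesis by simp
qed

section \<open>The partial colouring\<close>

definition half_difference :: "'a set \<Rightarrow> ('a \<Rightarrow> int) \<Rightarrow> ('a \<Rightarrow> int) \<Rightarrow> 'a \<Rightarrow> int" where
  "half_difference X \<omega>1 \<omega>0 x = (if x \<in> X then (\<omega>1 x - \<omega>0 x) div 2 else 0)"

lemma half_difference_value:
  assumes "\<omega>0 \<in> sign_vectors X" "\<omega>1 \<in> sign_vectors X" "x \<in> X"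
  shows "half_difference X \<omega>1 \<omega>0 x \<in> {-1, 0, 1}"
    and "half_difference X \<omega>1 \<omega>0 x \<noteq> 0 \<longleftrightarrow> \<omega>1 x \<noteq> \<omega>0 x"
    and "real_of_int (half_difference X \<omega>1 \<omega>0 x) = (real_of_int (\<omega>1 x) - real_of_int (\<omega>0 x)) / 2"
  using sign_vectors_value[OF assms(1,3)] sign_vectors_value[OF assms(2,3)] assms(3)
  unfolding half_difference_def by auto

lemma abs_half_difference_le:
  assumes "\<omega>0 \<in> sign_vectors X" "\<omega>1 \<in> sign_vectors X"
  shows "\<bar>half_difference X \<omega>1 \<omega>0 x\<bar> \<le> 1"
proof (cases "x \<in> X")
  case True
  then show ?thesis using half_difference_value(1)[OF assms True] by auto
qed (simp add: half_difference_def)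

lemma chi_sum_half_difference_inter:
  "finite A \<Longrightarrow> chi_sum (half_difference X \<omega>1 \<omega>0) (A \<inter> X) = chi_sum (half_difference X \<omega>1 \<omega>0) A"
  unfolding chi_sum_def by (intro sum.mono_neutral_left) (auto simp: half_difference_def)

lemma abs_chi_sum_half_difference_lt:
  assumes \<omega>: "\<omega>0 \<in> sign_vectors X" "\<omega>1 \<in> sign_vectors X" and S: "S \<subseteq> X" and \<Delta>: "\<Delta> > 0"
    and eq: "rounded_sum S \<Delta> \<omega>1 = rounded_sum S \<Delta> \<omega>0"
  shows "\<bar>real_of_int (chi_sum (half_difference X \<omega>1 \<omega>0) S)\<bar> < \<Delta>"
proof -
  have "real_of_int (chi_sum (half_difference X \<omega>1 \<omega>0) S) = (spin_sum S \<omega>1 - spin_sum S \<omega>0) / 2"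
    unfolding chi_sum_def spin_sum_def of_int_sum sum_subtractf[symmetric] sum_divide_distrib
    using half_difference_value(3)[OF \<omega>] S by (intro sum.cong) auto
  with rounded_sum_eq_imp_close[OF \<Delta> eq] show ?thesis by simp
qed

lemma finite_AP: "A0 \<in> APs d N \<Longrightarrow> finite A0"
  unfolding APs_def using finite_progression by auto

lemma exists_partial_coloring_small_on_dyadic_blocks:
  assumes N: "N \<ge> 1" and d: "d \<ge> 1" and X: "X \<subseteq> grid d N"
    and K0: "(5 * N)^d \<le> 2^(K0 * (d + 1))"
  shows "\<exists>\<chi>. (\<forall>x\<in>X. \<chi> x \<in> {-1, 0, 1}) \<and> real (card {x\<in>X. \<chi> x \<noteq> 0}) \<ge> real (card X) / 10 \<and>
           (\<forall>x. \<bar>\<chi> x\<bar> \<le> 1) \<and> (\<forall>x. x \<notin> X \<longrightarrow> \<chi> x = 0) \<and>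
           (\<forall>(k, b, a)\<in>dyadic_blocks d N.
              \<bar>real_of_int (chi_sum \<chi> (progression a b (2^k)))\<bar> \<le> threshold d K0 k)"
proof -
  have finX: "finite X" using X finite_grid finite_subset by blast
  have "real ((5 * N)^d) \<le> real (2^(K0 * (d + 1)))" using K0 by (simp only: of_nat_le_iff)
  then have K0': "real ((5 * N)^d) \<le> 2^(K0 * (d + 1))" by simp
  define Y where "Y = (\<lambda>(k, b, a). rounded_sum (progression a b (2^k) \<inter> X) (threshold d K0 k))"
  have "(\<Sum>i\<in>dyadic_blocks d N. entropy (sign_vectors X) (Y i))
      = (\<Sum>(k, b, a)\<in>dyadic_blocks d N. entropy (sign_vectors X)
           (rounded_sum (progression a b (2^k) \<inter> X) (threshold d K0 k)))"
    unfolding Y_def by (intro sum.cong) auto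
  also have "\<dots> \<le> card X / 4" by (rule entropy_dyadic_blocks_le[OF N d X K0'])
  finally obtain \<omega>0 \<omega>1 where \<omega>: "\<omega>0 \<in> sign_vectors X" "\<omega>1 \<in> sign_vectors X"
    and same: "\<forall>i\<in>dyadic_blocks d N. Y i \<omega>1 = Y i \<omega>0"
    and far: "card X \<le> 10 * card {x\<in>X. \<omega>1 x \<noteq> \<omega>0 x}"
    using exists_far_pair_same_values[OF finX finite_dyadic_blocks] by blast
  let ?\<chi> = "half_difference X \<omega>1 \<omega>0"
  have "\<bar>real_of_int (chi_sum ?\<chi> (progression a b (2^k)))\<bar> \<le> threshold d K0 k"
    if "(k, b, a) \<in> dyadic_blocks d N" for k b a
  proof -
    have "rounded_sum (progression a b (2^k) \<inter> X) (threshold d K0 k) \<omega>1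
        = rounded_sum (progression a b (2^k) \<inter> X) (threshold d K0 k) \<omega>0"
      using same that unfolding Y_def by auto
    from abs_chi_sum_half_difference_lt[OF \<omega> Int_lower2 threshold_pos this]
    show ?thesis using chi_sum_half_difference_inter[OF finite_progression] by simp
  qed
  moreover have "{x\<in>X. ?\<chi> x \<noteq> 0} = {x\<in>X. \<omega>1 x \<noteq> \<omega>0 x}"
    using half_difference_value(2)[OF \<omega>] by blast
  ultimately show ?thesis
    using half_difference_value(1)[OF \<omega>] abs_half_difference_le[OF \<omega>] far
    by (intro exI[of _ ?\<chi>]) (auto simp: half_difference_def)
qed

lemma abs_chi_sum_AP_le:
  fixes \<chi> :: "int list \<Rightarrow> int"
  assumes N: "N \<ge> 1" and least: "K0 = 0 \<or> 2^((K0 - 1) * (d + 1)) < (5 * N)^d"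
    and \<chi>: "\<And>x. \<bar>\<chi> x\<bar> \<le> 1"
    and blocks: "\<And>k b a. (k, b, a) \<in> dyadic_blocks d N \<Longrightarrow>
                   \<bar>real_of_int (chi_sum \<chi> (progression a b (2^k)))\<bar> \<le> threshold d K0 k"
    and A0: "A0 \<in> APs d N"
  shows "\<bar>real_of_int (chi_sum \<chi> A0)\<bar> \<le> (500 * real d + 10^6) * real N powr (real d / (2 * real d + 2))"
proof -
  have "\<bar>real_of_int (chi_sum \<chi> A0)\<bar> \<le> 2 * (1 + (\<Sum>k\<in>{1..N}. threshold d K0 k))"
    using \<chi> blocks threshold_pos A0 by (intro chi_sum_AP_le_dyadic_blocks) (auto intro: less_imp_le)
  also have "\<dots> \<le> 2 + 2400 * sqrt (real d + 1) * sqrt (2^K0)"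
    using sum_threshold_le[of d K0 N] by (simp add: mult.assoc)
  also have "\<dots> \<le> (500 * real d + 10^6) * real N powr (real d / (2 * real d + 2))"
    using discrepancy_constant_le[OF N sqrt_scale_le[OF N least]] .
  finally show ?thesis .
qed

theorem proposition3p4:
  fixes d N :: nat and X :: "int list set"
  assumes "N \<ge> 1" and "X \<subseteq> grid d N"
  shows "\<exists>\<chi> :: int list \<Rightarrow> int.
           (\<forall>x\<in>X. \<chi> x \<in> {-1, 0, 1}) \<and>
           real (card {x\<in>X. \<chi> x \<noteq> 0}) \<ge> real (card X) / 10 \<and>
           (\<forall>A0\<in>APs d N. real_of_int \<bar>chi_sum \<chi> (A0 \<inter> X)\<bar>
              \<le> (500 * real d + 10^6) * real N powr (real d / (2 * real d + 2)))"
proof (cases "d = 0")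
  case True
  then have "APs d N = {}" unfolding APs_def by auto
  then show ?thesis by (intro exI[of _ "\<lambda>_. 1"]) simp
next
  case False
  obtain K0 where K0: "(5 * N)^d \<le> 2^(K0 * (d + 1))"
    and least: "K0 = 0 \<or> 2^((K0 - 1) * (d + 1)) < (5 * N)^d"
    using exists_least_scale by blast
  obtain \<chi> where coloring: "\<forall>x\<in>X. \<chi> x \<in> {-1, 0, 1}" "real (card {x\<in>X. \<chi> x \<noteq> 0}) \<ge> real (card X) / 10"
    and bounded: "\<And>x. \<bar>\<chi> x\<bar> \<le> 1" and outside: "\<And>x. x \<notin> X \<Longrightarrow> \<chi> x = 0"
    and blocks: "\<And>k b a. (k, b, a) \<in> dyadic_blocks d N \<Longrightarrow>
                   \<bar>real_of_int (chi_sum \<chi> (progression a b (2^k)))\<bar> \<le> threshold d K0 k"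
    using exists_partial_coloring_small_on_dyadic_blocks[OF assms(1) _ assms(2) K0] False by fastforce
  have "chi_sum \<chi> (A0 \<inter> X) = chi_sum \<chi> A0" if "A0 \<in> APs d N" for A0
    unfolding chi_sum_def using outside finite_AP[OF that] by (intro sum.mono_neutral_left) auto
  then show ?thesis
    using coloring abs_chi_sum_AP_le[OF assms(1) least bounded blocks] by (intro exI[of _ \<chi>]) auto
qed

end
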